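(* For a real Banach space $X$ the following are equivalent: (a) $X^*$ is uniformly w*-denting, i.e. $d^*(t) > 0$ for all $0<t<2$. (b) For every $\varepsilon>0$ there exists $\delta(\varepsilon)>0$ such that $F_\varepsilon \subseteq (1-\delta(\varepsilon)) B(X^* )$. (c) $X^*$ is uniformly convex. (d) $X^*$ is uniformly w*-denting (I). (e) $X$ has the H-UMIP.
   Context: $B(\cdot)$, $S(\cdot)$ denote closed unit ball and unit sphere. For $x \in S(X)$ and real $\alpha$, the w*-slice is $S(B(X^* ), x, \alpha) := \{g \in B(X^* ) : g(x) > \alpha\}$; w*-slices of $B(X^* )$ are the sets $S(B(X^* ),x,\alpha)$ with $x \in S(X)$, $0<\alpha<1$. For $0<t<2$, $f \in S(X^* )$, $x \in S(X)$: $s^*(f,x,t) := \inf\{\|f+h\| - 1 : h\in X^*,\ \|h\| \geq t/4,\ h(x)=0\}$; $d^*(f,t) := \sup_{x\in S(X)} s^*(f,x,t)$; $d^*(t) := \inf_{f\in S(X^* )} d^*(f,t)$. For $\varepsilon>0$, $F_\varepsilon := B(X^* ) \setminus \bigcup\{S : S \text{ a w*-slice of } B(X^* ) \text{ with } \operatorname{diam}(S) < \varepsilon\}$. A Banach space $Y$ is uniformly convex if $\delta_Y(t) := \inf\{1 - \|x+y\|/2 : x,y \in S(Y),\ \|x-y\| \geq t\} > 0$ for all $t>0$. $X^*$ is uniformly w*-denting (I) if for every $\varepsilon>0$ there exists $0<\alpha<1$ such that for every $f \in S(X^* )$ there is $x \in S(X)$ with $f(x) > \alpha$ and $\operatorname{diam}(S(B(X^*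 ),x,\alpha)) < \varepsilon$. $X$ has the Hyperplane UMIP (H-UMIP) if for every $\varepsilon>0$ and every $M \geq 1$ there is $K>0$ such that whenever $C \subseteq X$ is closed convex and $f \in S(X^* )$ satisfy $\sup\{\|x\| : x \in C\} \leq M$ and $\inf f(C) \geq \varepsilon$, there is a closed ball $B[x_0,r_0] \supseteq C$ with $\inf f(B[x_0,r_0]) \geq \varepsilon/2$ and $r_0 \leq K$. *)

theory Defs
  imports "HOL-Analysis.Analysis"
begin

(* The dual space X^dual of a real Banach space X is modelled as the type
  of bounded linear functionals  'a =>L real  with the operator norm.  *)

definition wslice :: "'a::real_normed_vector \<Rightarrow> real \<Rightarrow> ('a \<Rightarrow>\<^sub>L real) set" where
  "wslice x \<alpha> = {g. norm g \<le> 1 \<and> blinfun_apply g x > \<alpha>}"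

(* s_star(f,x,t) = inf{ ||f+h|| - 1 : ||h|| >= t/4, h(x) = 0 } (extended-real infimum,
  so the infimum of the empty set is +infinity).  *)
definition s_star :: "('a::real_normed_vector \<Rightarrow>\<^sub>L real) \<Rightarrow> 'a \<Rightarrow> real \<Rightarrow> ereal" where
  "s_star f x t = (INF h \<in> {h :: 'a \<Rightarrow>\<^sub>L real. norm h \<ge> t / 4 \<and> blinfun_apply h x = 0}.
                     ereal (norm (f + h) - 1))"

definition d_star_f :: "('a::real_normed_vector \<Rightarrow>\<^sub>L real) \<Rightarrow> real \<Rightarrow> ereal" where
  "d_star_f f t = (SUP x \<in> sphere (0::'a) 1. s_star f x t)"

definition d_star :: "'a::real_normed_vector itself \<Rightarrow> real \<Rightarrow> ereal" where
  "d_star _ t = (INF f \<in> sphere (0::'a \<Rightarrow>\<^sub>L real) 1. d_star_f f t)"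

definition F_eps :: "'a::real_normed_vector itself \<Rightarrow> real \<Rightarrow> ('a \<Rightarrow>\<^sub>L real) set" where
  "F_eps _ \<epsilon> = cball 0 1 - \<Union> {S. \<exists>(x::'a) \<alpha>. norm x = 1 \<and> 0 < \<alpha> \<and> \<alpha> < 1 \<and>
                         S = wslice x \<alpha> \<and> diameter S < \<epsilon>}"

definition modulus_convexity :: "'b::real_normed_vector itself \<Rightarrow> real \<Rightarrow> ereal" where
  "modulus_convexity _ t = (INF p \<in> {(x::'b, y). norm x = 1 \<and> norm y = 1 \<and> norm (x - y) \<ge> t}.
                              ereal (1 - norm (fst p + snd p) / 2))"

definition uniformly_convex :: "'b::real_normed_vector itself \<Rightarrow> bool" where
  "uniformly_convex T \<longleftrightarrow> (\<forall>t>0. modulus_convexity T t > 0)"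

definition uniformly_wstar_denting_I :: "'a::real_normed_vector itself \<Rightarrow> bool" where
  "uniformly_wstar_denting_I _ \<longleftrightarrow>
     (\<forall>\<epsilon>>0. \<exists>\<alpha>. 0 < \<alpha> \<and> \<alpha> < 1 \<and>
        (\<forall>f :: 'a \<Rightarrow>\<^sub>L real. norm f = 1 \<longrightarrow>
           (\<exists>x. norm x = 1 \<and> blinfun_apply f x > \<alpha> \<and> diameter (wslice x \<alpha>) < \<epsilon>)))"

definition H_UMIP :: "'a::real_normed_vector itself \<Rightarrow> bool" where
  "H_UMIP _ \<longleftrightarrow>
     (\<forall>\<epsilon>>0. \<forall>M\<ge>1. \<exists>K>0. \<forall>(C::'a set) (f::'a \<Rightarrow>\<^sub>L real).
        closed C \<and> convex C \<and> norm f = 1 \<and> (\<forall>x\<in>C. norm x \<le> M) \<and>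
        (\<forall>x\<in>C. blinfun_apply f x \<ge> \<epsilon>) \<longrightarrow>
        (\<exists>x0 r0. 0 \<le> r0 \<and> C \<subseteq> cball x0 r0 \<and>
                 (\<forall>y\<in>cball x0 r0. blinfun_apply f y \<ge> \<epsilon> / 2) \<and> r0 \<le> K))"

end

theory Submission
  imports Defs
begin

text \<open>All five conditions are shown equivalent to the \<open>\<epsilon>\<close>--\<open>\<delta>\<close> form of uniform convexity of the
  dual. Uniform convexity makes every w*-slice \<open>S(B(X*), x, \<alpha>)\<close> with \<open>\<alpha>\<close> close to \<open>1\<close> uniformly
  small, which gives (b) and (d); it forces \<open>\<parallel>m + h\<parallel> > 1\<close> when \<open>h\<close> is not small and vanishes at
  a point where \<open>m\<close> nearly attains its norm, which gives (a); and it lets a ball centred far out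
  in a direction where \<open>f\<close> nearly attains its norm swallow every bounded subset of
  \<open>{f \<ge> \<epsilon>}\<close>, which gives (e). Conversely, each condition, applied to the direction of \<open>f + g\<close> for
  unit functionals \<open>f\<close>, \<open>g\<close> that are far apart, keeps \<open>\<parallel>f + g\<parallel>\<close> away from \<open>2\<close>. Norming
  functionals (Hahn--Banach) are obtained from Zorn's lemma.\<close>

section \<open>Norming functionals\<close>

text \<open>Norm-dominated linear functionals on subspaces are represented by their graphs, so that
  Zorn's lemma applies to \<open>\<subseteq>\<close>.\<close>
definition norming_graph :: "'a::real_normed_vector \<Rightarrow> ('a \<times> real) set \<Rightarrow> bool" where
  "norming_graph x0 G \<longleftrightarrow> (x0, norm x0) \<in> G
     \<and> (\<forall>a u v. (a, u) \<in> G \<longrightarrow> (a, v) \<in> G \<longrightarrow> u = v)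
     \<and> (\<forall>a b u v. (a, u) \<in> G \<longrightarrow> (b, v) \<in> G \<longrightarrow> (a + b, u + v) \<in> G)
     \<and> (\<forall>a u c. (a, u) \<in> G \<longrightarrow> (c *\<^sub>R a, c * u) \<in> G)
     \<and> (\<forall>a u. (a, u) \<in> G \<longrightarrow> u \<le> norm a)"

lemma norming_graph_line: "norming_graph x0 (range (\<lambda>c. (c *\<^sub>R x0, c * norm x0)))"
proof -
  define L where "L = range (\<lambda>c. (c *\<^sub>R x0, c * norm x0))"
  have mem: "(a, u) \<in> L \<longleftrightarrow> (\<exists>c. a = c *\<^sub>R x0 \<and> u = c * norm x0)" for a u
    unfolding L_def by auto
  have "u = v" if P: "(a, u) \<in> L" "(a, v) \<in> L" for a u v
  proof -
    obtain c d where "a = c *\<^sub>R x0" "u = c * norm x0" "a = d *\<^sub>R x0" "v = d * norm x0"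
      using P mem by blast
    then show ?thesis by (cases "x0 = 0") (simp, metis scaleR_cancel_right)
  qed
  moreover have "(a + b, u + v) \<in> L" if "(a, u) \<in> L" "(b, v) \<in> L" for a b u v
    using that unfolding mem by (metis distrib_right scaleR_add_left)
  moreover have "(e *\<^sub>R a, e * u) \<in> L" if "(a, u) \<in> L" for a u e
    using that unfolding mem by (metis mult.assoc scaleR_scaleR)
  moreover have "u \<le> norm a" if "(a, u) \<in> L" for a u
    using that unfolding mem by (auto simp: mult_right_mono)
  moreover have "(x0, norm x0) \<in> L" unfolding mem by (metis mult_1 scaleR_one)
  ultimately show ?thesis unfolding norming_graph_def L_def[symmetric] by blast
qed

lemma norming_graph_Union_chain:
  assumes "C \<in> chains {G. norming_graph x0 G}" and "C \<noteq> {}"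
  shows "norming_graph x0 (\<Union>C)"
proof -
  have graphs: "norming_graph x0 G" if "G \<in> C" for G
    using assms(1) that by (auto simp: chains_def)
  have common: "\<exists>G\<in>C. p \<in> G \<and> q \<in> G" if "p \<in> \<Union>C" "q \<in> \<Union>C" for p q
    using assms(1) that unfolding chains_def chain_subset_def by blast
  obtain G0 where "G0 \<in> C" using assms(2) by blast
  then have "(x0, norm x0) \<in> \<Union>C" using graphs unfolding norming_graph_def by blast
  moreover have "u = v" if "(a, u) \<in> \<Union>C" "(a, v) \<in> \<Union>C" for a u v
    using common[OF that] graphs unfolding norming_graph_def by blast
  moreover have "(a + b, u + v) \<in> \<Union>C" if "(a, u) \<in> \<Union>C" "(b, v) \<in> \<Union>C" for a b u v
    using common[OF that] graphs unfolding norming_graph_def by blast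
  moreover have "(c *\<^sub>R a, c * u) \<in> \<Union>C \<and> u \<le> norm a" if "(a, u) \<in> \<Union>C" for a u c
    using that graphs unfolding norming_graph_def by blast
  ultimately show ?thesis unfolding norming_graph_def by blast
qed

lemma norming_graph_extension_coeff_unique:
  assumes G: "norming_graph x0 G" and y: "\<nexists>u. (y, u) \<in> G"
    and "(a, u) \<in> G" and "(a', u') \<in> G" and "a + c *\<^sub>R y = a' + c' *\<^sub>R y"
  shows "c = c'"
proof (rule ccontr)
  have add: "\<And>a b u v. (a, u) \<in> G \<Longrightarrow> (b, v) \<in> G \<Longrightarrow> (a + b, u + v) \<in> G"
   and scale: "\<And>a u c. (a, u) \<in> G \<Longrightarrow> (c *\<^sub>R a, c * u) \<in> G"
    using G unfolding norming_graph_def by blast+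
  assume "c \<noteq> c'"
  moreover have "(c - c') *\<^sub>R y = a' + (-1) *\<^sub>R a"
    using assms(5) by (simp add: algebra_simps)
  ultimately have "y = (1 / (c - c')) *\<^sub>R (a' + (-1) *\<^sub>R a)"
    by (metis divide_self_if nonzero_divide_eq_eq right_minus_eq scaleR_one scaleR_scaleR)
  moreover have "((1 / (c - c')) *\<^sub>R (a' + (-1) *\<^sub>R a), (1 / (c - c')) * (u' + (-1) * u)) \<in> G"
    using scale[OF add[OF assms(4) scale[OF assms(3)]]] .
  ultimately show False using y by auto
qed

text \<open>The bounds on \<open>r\<close>, the value assigned to the new direction \<open>y\<close>, are those of the
  Hahn--Banach extension step.\<close>
lemma norming_graph_extension_dominated:
  assumes G: "norming_graph x0 G"
    and low: "\<And>a u. (a, u) \<in> G \<Longrightarrow> u - norm (a - y) \<le> r"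
    and up: "\<And>b v. (b, v) \<in> G \<Longrightarrow> r \<le> norm (b + y) - v"
    and "(a, u) \<in> G"
  shows "u + c * r \<le> norm (a + c *\<^sub>R y)"
proof -
  have scale: "\<And>a u c. (a, u) \<in> G \<Longrightarrow> (c *\<^sub>R a, c * u) \<in> G"
   and dom: "\<And>a u. (a, u) \<in> G \<Longrightarrow> u \<le> norm a"
    using G unfolding norming_graph_def by blast+
  consider "c = 0" | "c > 0" | "c < 0" by linarith
  then show ?thesis
  proof cases
    case 1
    then show ?thesis using dom[OF assms(4)] by simp
  next
    case 2
    have "r \<le> norm ((1 / c) *\<^sub>R a + y) - (1 / c) * u" using up[OF scale[OF assms(4)]] .
    then have "u + c * r \<le> c * norm ((1 / c) *\<^sub>R a + y)"
      using 2 by (simp add: field_simps)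
    also have "c * norm ((1 / c) *\<^sub>R a + y) = norm (c *\<^sub>R ((1 / c) *\<^sub>R a + y))"
      using 2 by simp
    also have "c *\<^sub>R ((1 / c) *\<^sub>R a + y) = a + c *\<^sub>R y"
      using 2 by (simp add: scaleR_add_right)
    finally show ?thesis .
  next
    case 3
    have "(1 / - c) * u - norm ((1 / - c) *\<^sub>R a - y) \<le> r" using low[OF scale[OF assms(4)]] .
    then have "u + c * r \<le> - c * norm ((1 / - c) *\<^sub>R a - y)"
      using 3 by (simp add: field_simps)
    also have "- c * norm ((1 / - c) *\<^sub>R a - y) = norm ((- c) *\<^sub>R ((1 / - c) *\<^sub>R a - y))"
      using 3 by simp
    also have "(- c) *\<^sub>R ((1 / - c) *\<^sub>R a - y) = a + c *\<^sub>R y"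
      using 3 by (simp add: scaleR_diff_right)
    finally show ?thesis .
  qed
qed

lemma norming_graph_extend:
  assumes G: "norming_graph x0 G" and y: "\<nexists>u. (y, u) \<in> G"
    and low: "\<And>a u. (a, u) \<in> G \<Longrightarrow> u - norm (a - y) \<le> r"
    and up: "\<And>b v. (b, v) \<in> G \<Longrightarrow> r \<le> norm (b + y) - v"
  shows "norming_graph x0 {(a + c *\<^sub>R y, u + c * r) | a u c. (a, u) \<in> G}"
proof -
  have sv: "\<And>a u v. (a, u) \<in> G \<Longrightarrow> (a, v) \<in> G \<Longrightarrow> u = v"
   and add: "\<And>a b u v. (a, u) \<in> G \<Longrightarrow> (b, v) \<in> G \<Longrightarrow> (a + b, u + v) \<in> G"
   and scale: "\<And>a u c. (a, u) \<in> G \<Longrightarrow> (c *\<^sub>R a, c * u) \<in> G"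
   and x0: "(x0, norm x0) \<in> G" using G unfolding norming_graph_def by blast+
  define H where "H = {(a + c *\<^sub>R y, u + c * r) | a u c. (a, u) \<in> G}"
  have mem: "(p, w) \<in> H \<longleftrightarrow> (\<exists>a u c. (a, u) \<in> G \<and> p = a + c *\<^sub>R y \<and> w = u + c * r)" for p w
    unfolding H_def by blast
  have "(x0, norm x0) \<in> H" using x0 unfolding mem by (metis add.right_neutral mult_zero_left scale_zero_left)
  moreover have "u = v" if "(p, u) \<in> H" "(p, v) \<in> H" for p u v
    using that unfolding mem
    by (metis norming_graph_extension_coeff_unique[OF G y] sv add_right_cancel)
  moreover have "(p + q, u + v) \<in> H" if P: "(p, u) \<in> H" "(q, v) \<in> H" for p q u v
  proof -
    obtain a u1 c a' u1' c' where "(a, u1) \<in> G" "p = a + c *\<^sub>R y" "u = u1 + c * r"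
      "(a', u1') \<in> G" "q = a' + c' *\<^sub>R y" "v = u1' + c' * r" using P unfolding mem by blast
    then show ?thesis unfolding mem
      by (intro exI[of _ "a + a'"] exI[of _ "u1 + u1'"] exI[of _ "c + c'"])
         (simp add: add algebra_simps)
  qed
  moreover have "(e *\<^sub>R p, e * u) \<in> H" if P: "(p, u) \<in> H" for p u e
  proof -
    obtain a u1 c where "(a, u1) \<in> G" "p = a + c *\<^sub>R y" "u = u1 + c * r"
      using P unfolding mem by blast
    then show ?thesis unfolding mem
      by (intro exI[of _ "e *\<^sub>R a"] exI[of _ "e * u1"] exI[of _ "e * c"])
         (simp add: scale algebra_simps)
  qed
  moreover have "u \<le> norm p" if "(p, u) \<in> H" for p u
    using that norming_graph_extension_dominated[OF G low up] unfolding mem by blast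
  ultimately show ?thesis unfolding norming_graph_def H_def[symmetric] by blast
qed

lemma norming_graph_extension_value:
  assumes "norming_graph x0 G"
  obtains r where "\<And>a u. (a, u) \<in> G \<Longrightarrow> u - norm (a - y) \<le> r"
    and "\<And>b v. (b, v) \<in> G \<Longrightarrow> r \<le> norm (b + y) - v"
proof -
  have add: "\<And>a b u v. (a, u) \<in> G \<Longrightarrow> (b, v) \<in> G \<Longrightarrow> (a + b, u + v) \<in> G"
   and dom: "\<And>a u. (a, u) \<in> G \<Longrightarrow> u \<le> norm a"
   and zero: "(0, 0) \<in> G"
    using assms unfolding norming_graph_def by (blast, blast, metis scale_zero_left mult_zero_left)
  have sep: "u - norm (a - y) \<le> norm (b + y) - v" if "(a, u) \<in> G" "(b, v) \<in> G" for a u b v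
    using dom[OF add[OF that]] norm_triangle_ineq[of "a - y" "b + y"] by simp
  define S where "S = (\<lambda>(a, u). u - norm (a - y)) ` G"
  have "S \<noteq> {}" "bdd_above S"
    using zero sep[OF _ zero] unfolding S_def bdd_above_def by force+
  then show ?thesis
    using sep by (intro that[of "Sup S"]) (force intro: cSup_upper cSup_least simp: S_def)+
qed

lemma maximal_norming_graph_total:
  assumes "norming_graph x0 G" and max: "\<And>H. norming_graph x0 H \<Longrightarrow> G \<subseteq> H \<Longrightarrow> H = G"
  shows "\<exists>u. (y, u) \<in> G"
proof (rule ccontr)
  assume y: "\<nexists>u. (y, u) \<in> G"
  obtain r where "\<And>a u. (a, u) \<in> G \<Longrightarrow> u - norm (a - y) \<le> r"
    and "\<And>b v. (b, v) \<in> G \<Longrightarrow> r \<le> norm (b + y) - v"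
    using norming_graph_extension_value[OF assms(1), where y=y] by blast
  define H where "H = {(a + c *\<^sub>R y, u + c * r) | a u c. (a, u) \<in> G}"
  have "norming_graph x0 H"
    unfolding H_def by (rule norming_graph_extend) fact+
  moreover have "G \<subseteq> H" unfolding H_def by force
  moreover have "(0, 0) \<in> G"
    using assms(1) unfolding norming_graph_def by (metis scale_zero_left mult_zero_left)
  then have "(y, r) \<in> H" unfolding H_def by force
  ultimately show False using max y by blast
qed

lemma exists_norming_functional:
  fixes x0 :: "'a::real_normed_vector"
  obtains k :: "'a \<Rightarrow>\<^sub>L real" where "norm k \<le> 1" and "k x0 = norm x0"
proof -
  have "\<forall>C\<in>chains {G. norming_graph x0 G}. \<exists>U\<in>{G. norming_graph x0 G}. \<forall>G\<in>C. G \<subseteq> U"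
    using norming_graph_line[of x0] norming_graph_Union_chain
    by (metis Union_upper mem_Collect_eq empty_iff)
  from Zorn_Lemma2[OF this] obtain G where G: "norming_graph x0 G"
    and max: "\<forall>H\<in>{G. norming_graph x0 G}. G \<subseteq> H \<longrightarrow> H = G"
    by blast
  have sv: "\<And>a u v. (a, u) \<in> G \<Longrightarrow> (a, v) \<in> G \<Longrightarrow> u = v"
   and add: "\<And>a b u v. (a, u) \<in> G \<Longrightarrow> (b, v) \<in> G \<Longrightarrow> (a + b, u + v) \<in> G"
   and scale: "\<And>a u c. (a, u) \<in> G \<Longrightarrow> (c *\<^sub>R a, c * u) \<in> G"
   and dom: "\<And>a u. (a, u) \<in> G \<Longrightarrow> u \<le> norm a"
   and x0: "(x0, norm x0) \<in> G" using G unfolding norming_graph_def by blast+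
  define k where "k z = (THE u. (z, u) \<in> G)" for z
  have graph: "(z, k z) \<in> G" for z
  proof -
    obtain u where u: "(z, u) \<in> G" using maximal_norming_graph_total[OF G] max by blast
    then have "k z = u" unfolding k_def using sv by blast
    then show ?thesis using u by simp
  qed
  have k_eq: "k z = u" if "(z, u) \<in> G" for z u using sv[OF graph that] .
  have bound: "norm (k z) \<le> norm z * 1" for z
    using dom[OF graph, of z] dom[OF graph, of "- z"] k_eq[OF scale[OF graph[of z], of "-1"]] by simp
  have bl: "bounded_linear k"
  proof (rule bounded_linear_intro)
    show "k (a + b) = k a + k b" for a b using k_eq[OF add[OF graph graph]] .
    show "k (c *\<^sub>R a) = c *\<^sub>R k a" for c a using k_eq[OF scale[OF graph]] by simp
  qed (rule bound)
  show ?thesis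
  proof
    show "norm (Blinfun k) \<le> 1"
      by (rule norm_blinfun_bound) (use bound in \<open>auto simp: bounded_linear_Blinfun_apply[OF bl]\<close>)
    show "Blinfun k x0 = norm x0" using k_eq[OF x0] by (simp add: bounded_linear_Blinfun_apply[OF bl])
  qed
qed

section \<open>Uniform convexity and functionals on the unit sphere\<close>

lemma blinfun_apply_unit_le:
  fixes f :: "'a::real_normed_vector \<Rightarrow>\<^sub>L real"
  assumes "norm x = 1"
  shows "f x \<le> norm f" and "\<bar>f x\<bar> \<le> norm f"
  using norm_blinfun[of f x] assms by simp_all

lemma blinfun_apply_le_add_dist:
  fixes f :: "'a::real_normed_vector \<Rightarrow>\<^sub>L real"
  assumes "norm f \<le> 1"
  shows "f x \<le> f y + dist x y"
  using norm_blinfun[of f "x - y"] assms mult_right_mono[OF assms, of "norm (x - y)"]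
  by (simp add: dist_norm blinfun.diff_right)

lemma norm_blinfun_le_unit_bound:
  fixes f :: "'a::real_normed_vector \<Rightarrow>\<^sub>L real"
  assumes "0 \<le> c" and bound: "\<And>v. norm v = 1 \<Longrightarrow> f v \<le> c"
  shows "norm f \<le> c"
proof (rule norm_blinfun_bound[OF assms(1)])
  fix x :: 'a
  show "norm (f x) \<le> c * norm x"
  proof (cases "x = 0")
    case False
    define v where "v = (1 / norm x) *\<^sub>R x"
    have "norm v = 1" "norm (- v) = 1" using False by (simp_all add: v_def)
    then have "f v \<le> c" "- f v \<le> c" using bound[of v] bound[of "- v"] by (simp_all add: blinfun.minus_right)
    then have "norm x * f v \<le> norm x * c" "norm x * - f v \<le> norm x * c"
      by (metis mult_left_mono norm_ge_zero)+
    moreover have "f x = norm x * f v" using False by (simp add: v_def blinfun.scaleR_right)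
    ultimately show ?thesis by (simp add: abs_le_iff mult.commute)
  qed simp
qed

lemma exists_unit_vector_apply_gt:
  fixes f :: "'a::real_normed_vector \<Rightarrow>\<^sub>L real"
  assumes "0 \<le> \<rho>" and "\<rho> < norm f"
  obtains v where "norm v = 1" and "\<rho> < f v"
  using norm_blinfun_le_unit_bound[OF assms(1)] assms(2) by (meson not_le)

lemma cball_functional_lower_bound:
  fixes \<phi> :: "'a::real_normed_vector \<Rightarrow>\<^sub>L real"
  assumes "norm \<phi> = 1" and "0 \<le> r" and bound: "\<And>y. y \<in> cball x0 r \<Longrightarrow> b \<le> \<phi> y"
  shows "b \<le> \<phi> x0 - r"
proof (cases "r = 0")
  case False
  then have "r > 0" using assms(2) by simp
  have "b \<le> \<phi> x0" using bound[of x0] assms(2) by simp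
  have "\<phi> v \<le> (\<phi> x0 - b) / r" if "norm v = 1" for v
  proof -
    have "b \<le> \<phi> (x0 - r *\<^sub>R v)" using bound that \<open>r > 0\<close> by (simp add: dist_norm)
    then have "r * \<phi> v \<le> \<phi> x0 - b" by (simp add: blinfun.diff_right blinfun.scaleR_right)
    then show ?thesis using \<open>r > 0\<close> by (simp add: pos_le_divide_eq mult.commute)
  qed
  then have "1 \<le> (\<phi> x0 - b) / r"
    using norm_blinfun_le_unit_bound[of "(\<phi> x0 - b) / r" \<phi>] \<open>b \<le> \<phi> x0\<close> \<open>r > 0\<close> assms(1) by simp
  then show ?thesis using \<open>r > 0\<close> by (simp add: pos_le_divide_eq)
qed (use assms(3) in simp)

definition uniformly_convex_eps_delta :: "'b::real_normed_vector itself \<Rightarrow> bool" where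
  "uniformly_convex_eps_delta _ \<longleftrightarrow> (\<forall>\<tau>>0. \<exists>\<delta>>0. \<forall>x y :: 'b. norm x = 1 \<longrightarrow> norm y = 1 \<longrightarrow>
      \<tau> \<le> norm (x - y) \<longrightarrow> norm (x + y) \<le> 2 - 2 * \<delta>)"

lemma uniformly_convex_iff_eps_delta:
  "uniformly_convex TYPE('b::real_normed_vector) \<longleftrightarrow> uniformly_convex_eps_delta TYPE('b)"
proof -
  have "0 < modulus_convexity TYPE('b) \<tau> \<longleftrightarrow> (\<exists>\<delta>>0. \<forall>x y :: 'b. norm x = 1 \<longrightarrow> norm y = 1 \<longrightarrow>
      \<tau> \<le> norm (x - y) \<longrightarrow> norm (x + y) \<le> 2 - 2 * \<delta>)" for \<tau>
  proof
    assume "0 < modulus_convexity TYPE('b) \<tau>"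
    then obtain \<delta> where "0 < ereal \<delta>" "ereal \<delta> < modulus_convexity TYPE('b) \<tau>"
      using ereal_dense2 by blast
    then show "\<exists>\<delta>>0. \<forall>x y :: 'b. norm x = 1 \<longrightarrow> norm y = 1 \<longrightarrow>
      \<tau> \<le> norm (x - y) \<longrightarrow> norm (x + y) \<le> 2 - 2 * \<delta>"
      unfolding modulus_convexity_def by (force dest: less_INF_D)
  next
    assume "\<exists>\<delta>>0. \<forall>x y :: 'b. norm x = 1 \<longrightarrow> norm y = 1 \<longrightarrow>
      \<tau> \<le> norm (x - y) \<longrightarrow> norm (x + y) \<le> 2 - 2 * \<delta>"
    then obtain \<delta> where "\<delta> > 0" and \<delta>: "\<And>x y :: 'b. norm x = 1 \<Longrightarrow> norm y = 1 \<Longrightarrow>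
      \<tau> \<le> norm (x - y) \<Longrightarrow> norm (x + y) \<le> 2 - 2 * \<delta>" by blast
    have "ereal \<delta> \<le> modulus_convexity TYPE('b) \<tau>"
      unfolding modulus_convexity_def by (rule INF_greatest) (force dest: \<delta>)
    then show "0 < modulus_convexity TYPE('b) \<tau>"
      using \<open>\<delta> > 0\<close> by (metis ereal_less(2) order_less_le_trans zero_ereal_def)
  qed
  then show ?thesis unfolding uniformly_convex_def uniformly_convex_eps_delta_def by blast
qed

lemma uniformly_convex_eps_delta_ball:
  assumes "uniformly_convex_eps_delta TYPE('b::real_normed_vector)" and "\<tau> > 0"
  obtains \<eta> where "0 < \<eta>" "\<eta> \<le> 1"
    and "\<And>x y :: 'b. norm x \<le> 1 \<Longrightarrow> norm y \<le> 1 \<Longrightarrow> 2 - \<eta> < norm (x + y) \<Longrightarrow> norm (x - y) < \<tau>"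
proof -
  obtain \<delta> where "\<delta> > 0" and \<delta>: "\<And>x y :: 'b. norm x = 1 \<Longrightarrow> norm y = 1 \<Longrightarrow>
      \<tau> / 2 \<le> norm (x - y) \<Longrightarrow> norm (x + y) \<le> 2 - 2 * \<delta>"
    using assms unfolding uniformly_convex_eps_delta_def by (meson half_gt_zero)
  define \<eta> where "\<eta> = min (2 * \<delta> / 3) (min (\<tau> / 4) 1)"
  have \<eta>: "\<eta> > 0" "\<eta> \<le> 1" "\<eta> \<le> 2 * \<delta> / 3" "\<eta> \<le> \<tau> / 4"
    using \<open>\<delta> > 0\<close> assms(2) unfolding \<eta>_def by auto
  have "norm (x - y) < \<tau>"
    if "norm x \<le> 1" "norm y \<le> 1" "2 - \<eta> < norm (x + y)" for x y :: 'b
  proof (rule ccontr)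
    assume "\<not> norm (x - y) < \<tau>"
    have "norm x > 1 - \<eta>" "norm y > 1 - \<eta>"
      using norm_triangle_ineq[of x y] that by linarith+
    then have "x \<noteq> 0" "y \<noteq> 0" using \<eta> by auto
    define x' y' where "x' = (1 / norm x) *\<^sub>R x" and "y' = (1 / norm y) *\<^sub>R y"
    have "norm x' = 1" "norm y' = 1" using \<open>x \<noteq> 0\<close> \<open>y \<noteq> 0\<close> by (simp_all add: x'_def y'_def)
    have "x' - x = (1 / norm x - 1) *\<^sub>R x" "y' - y = (1 / norm y - 1) *\<^sub>R y"
      by (simp_all add: x'_def y'_def scaleR_diff_left)
    then have "norm (x' - x) = 1 - norm x" "norm (y' - y) = 1 - norm y"
      using that \<open>x \<noteq> 0\<close> \<open>y \<noteq> 0\<close> by (simp_all add: abs_of_nonneg field_simps)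
    moreover have "norm (x - y) \<le> norm (x' - y') + norm (x' - x) + norm (y' - y)"
      using norm_triangle_ineq4[of "x' - y'" "(x' - x) - (y' - y)"] norm_triangle_ineq4[of "x' - x" "y' - y"]
      by (simp add: algebra_simps)
    moreover have "norm (x + y) \<le> norm (x' + y') + norm (x' - x) + norm (y' - y)"
      using norm_triangle_ineq4[of "x' + y'" "(x' - x) + (y' - y)"] norm_triangle_ineq[of "x' - x" "y' - y"]
      by (simp add: algebra_simps)
    ultimately have "\<tau> / 2 \<le> norm (x' - y')" "2 - \<eta> < norm (x' + y') + 2 * \<eta>"
      using \<open>\<not> norm (x - y) < \<tau>\<close> \<open>norm x > 1 - \<eta>\<close> \<open>norm y > 1 - \<eta>\<close> \<eta> that(3) by linarith+
    then show False using \<delta>[OF \<open>norm x' = 1\<close> \<open>norm y' = 1\<close>] \<eta> by linarith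
  qed
  then show ?thesis using that \<eta>(1,2) by blast
qed

section \<open>Weak-star slices: conditions (b) and (d)\<close>

lemma mem_wslice [simp]: "g \<in> wslice x \<alpha> \<longleftrightarrow> norm g \<le> 1 \<and> \<alpha> < g x"
  unfolding wslice_def by simp

lemma bounded_wslice: "bounded (wslice x \<alpha>)"
  by (rule bounded_subset[OF bounded_cball[of 0 1]]) auto

lemma dist_le_diameter_wslice:
  "f \<in> wslice x \<alpha> \<Longrightarrow> g \<in> wslice x \<alpha> \<Longrightarrow> dist f g \<le> diameter (wslice x \<alpha>)"
  using diameter_bounded_bound[OF bounded_wslice] by blast

lemma diameter_wslice_le:
  fixes x :: "'a::real_normed_vector"
  assumes uc: "\<And>f g :: 'a \<Rightarrow>\<^sub>L real. norm f \<le> 1 \<Longrightarrow> norm g \<le> 1 \<Longrightarrow>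
      2 - \<eta> < norm (f + g) \<Longrightarrow> norm (f - g) < \<tau>"
    and "norm x = 1" and "1 - \<eta> / 2 \<le> \<alpha>" and "0 \<le> \<tau>"
  shows "diameter (wslice x \<alpha>) \<le> \<tau>"
proof (rule diameter_le)
  fix f g assume "f \<in> wslice x \<alpha>" "g \<in> wslice x \<alpha>"
  then have "norm f \<le> 1" "norm g \<le> 1" "2 - \<eta> < (f + g) x"
    using assms(3) by (auto simp: blinfun.add_left)
  moreover have "(f + g) x \<le> norm (f + g)" using blinfun_apply_unit_le(1)[OF assms(2)] .
  ultimately show "norm (f - g) \<le> \<tau>" using uc by (meson less_imp_le order_less_le_trans)
qed (use assms(4) in simp)

lemma uniformly_convex_dual_imp_wstar_denting_I:
  assumes uc: "uniformly_convex_eps_delta TYPE('a::real_normed_vector \<Rightarrow>\<^sub>L real)"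
  shows "uniformly_wstar_denting_I (X :: 'a itself)"
  unfolding uniformly_wstar_denting_I_def
proof (intro allI impI)
  fix \<epsilon> :: real assume "\<epsilon> > 0"
  then obtain \<eta> where "0 < \<eta>" "\<eta> \<le> 1" and \<eta>: "\<And>f g :: 'a \<Rightarrow>\<^sub>L real. norm f \<le> 1 \<Longrightarrow> norm g \<le> 1 \<Longrightarrow>
      2 - \<eta> < norm (f + g) \<Longrightarrow> norm (f - g) < \<epsilon> / 2"
    using uniformly_convex_eps_delta_ball[OF uc, of "\<epsilon> / 2"] by auto
  have "\<exists>x. norm x = 1 \<and> 1 - \<eta> / 2 < f x \<and> diameter (wslice x (1 - \<eta> / 2)) < \<epsilon>"
    if f1: "norm f = 1" for f :: "'a \<Rightarrow>\<^sub>L real"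
  proof -
    obtain x where "norm x = 1" "1 - \<eta> / 2 < f x"
      using exists_unit_vector_apply_gt[of "1 - \<eta> / 2" f] f1 \<open>0 < \<eta>\<close> \<open>\<eta> \<le> 1\<close> by auto
    moreover have "diameter (wslice x (1 - \<eta> / 2)) \<le> \<epsilon> / 2"
      using diameter_wslice_le[OF \<eta> \<open>norm x = 1\<close>] \<open>\<epsilon> > 0\<close> by simp
    ultimately show ?thesis using \<open>\<epsilon> > 0\<close> by fastforce
  qed
  moreover have "0 < 1 - \<eta> / 2" "1 - \<eta> / 2 < 1" using \<open>0 < \<eta>\<close> \<open>\<eta> \<le> 1\<close> by auto
  ultimately show "\<exists>\<alpha>>0. \<alpha> < 1 \<and> (\<forall>f :: 'a \<Rightarrow>\<^sub>L real. norm f = 1 \<longrightarrow>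
      (\<exists>x. norm x = 1 \<and> \<alpha> < blinfun_apply f x \<and> diameter (wslice x \<alpha>) < \<epsilon>))" by blast
qed

lemma mix_mem_wslice:
  fixes p \<phi> :: "'a::real_normed_vector \<Rightarrow>\<^sub>L real"
  assumes "norm p = 1" and "norm \<phi> \<le> 1" and "\<phi> x = 1" and "4 * \<alpha> - 3 < p x"
  shows "(1/4) *\<^sub>R p + (3/4) *\<^sub>R \<phi> \<in> wslice x \<alpha>"
proof -
  have "norm ((1/4) *\<^sub>R p + (3/4) *\<^sub>R \<phi>) \<le> 1"
    using norm_triangle_ineq[of "(1/4) *\<^sub>R p" "(3/4) *\<^sub>R \<phi>"] assms(1,2) by simp
  then show ?thesis using assms(3,4) by (simp add: blinfun.add_left blinfun.scaleR_left)
qed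

text \<open>The slice point \<open>x\<close> of the direction of \<open>f + g\<close> is one where both \<open>f\<close> and \<open>g\<close> are close
  to \<open>1\<close>; mixing them with a functional \<open>\<phi>\<close> norming \<open>x\<close> puts \<open>(f + 3\<phi>)/4\<close> and \<open>(g + 3\<phi>)/4\<close> into
  the small slice at \<open>x\<close>, so \<open>norm (f - g) / 4\<close> is small.\<close>
lemma wstar_denting_I_imp_uniformly_convex_dual:
  assumes "uniformly_wstar_denting_I (X :: 'a::real_normed_vector itself)"
  shows "uniformly_convex_eps_delta TYPE('a \<Rightarrow>\<^sub>L real)"
  unfolding uniformly_convex_eps_delta_def
proof (intro allI impI)
  fix \<tau> :: real assume "\<tau> > 0"
  then obtain \<alpha> where "0 < \<alpha>" "\<alpha> < 1" and slice: "\<And>f :: 'a \<Rightarrow>\<^sub>L real. norm f = 1 \<Longrightarrow>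
      \<exists>x. norm x = 1 \<and> \<alpha> < blinfun_apply f x \<and> diameter (wslice x \<alpha>) < \<tau> / 4"
    using assms unfolding uniformly_wstar_denting_I_def by (metis divide_pos_pos zero_less_numeral)
  define \<delta> where "\<delta> = (1 - \<alpha>) / 8"
  have "norm (f + g) \<le> 2 - 2 * \<delta>"
    if f: "norm f = 1" and g: "norm g = 1" and fg: "\<tau> \<le> norm (f - g)" for f g :: "'a \<Rightarrow>\<^sub>L real"
  proof (rule ccontr)
    define s where "s = norm (f + g)"
    assume "\<not> norm (f + g) \<le> 2 - 2 * \<delta>"
    then have s: "2 - 2 * \<delta> < s" "0 < s" using \<open>\<alpha> > 0\<close> by (auto simp: s_def \<delta>_def)
    obtain x where x: "norm x = 1" "\<alpha> < ((1 / s) *\<^sub>R (f + g)) x" "diameter (wslice x \<alpha>) < \<tau> / 4"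
      using slice[of "(1 / s) *\<^sub>R (f + g)"] s by (auto simp: s_def)
    obtain \<phi> :: "'a \<Rightarrow>\<^sub>L real" where \<phi>: "norm \<phi> \<le> 1" "\<phi> x = 1"
      using exists_norming_functional[of x] x(1) by metis
    have "(2 - 2 * \<delta>) * \<alpha> < s * ((1 / s) *\<^sub>R (f + g)) x"
      using s x(2) \<open>\<alpha> > 0\<close> by (intro mult_strict_mono) auto
    moreover have "\<delta> * \<alpha> \<le> \<delta>"
      using \<open>\<alpha> < 1\<close> \<open>\<alpha> > 0\<close> by (simp add: \<delta>_def mult_left_le)
    then have "2 * \<alpha> - 2 * \<delta> \<le> (2 - 2 * \<delta>) * \<alpha>" by (simp add: algebra_simps)
    ultimately have "2 * \<alpha> - 2 * \<delta> < f x + g x"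
      using s by (simp add: blinfun.add_left blinfun.scaleR_left)
    moreover have "f x \<le> 1" "g x \<le> 1" using blinfun_apply_unit_le(1)[OF x(1)] f g by metis+
    ultimately have low: "4 * \<alpha> - 3 < f x" "4 * \<alpha> - 3 < g x"
      using \<open>\<alpha> < 1\<close> by (simp_all add: \<delta>_def field_simps)
    have "dist ((1/4) *\<^sub>R f + (3/4) *\<^sub>R \<phi>) ((1/4) *\<^sub>R g + (3/4) *\<^sub>R \<phi>) < \<tau> / 4"
      using dist_le_diameter_wslice[OF mix_mem_wslice[OF f \<phi> low(1)] mix_mem_wslice[OF g \<phi> low(2)]] x(3)
      by linarith
    then show False using fg by (simp add: dist_norm flip: scaleR_diff_right)
  qed
  moreover have "\<delta> > 0" using \<open>\<alpha> < 1\<close> by (simp add: \<delta>_def)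
  ultimately show "\<exists>\<delta>>0. \<forall>f g :: 'a \<Rightarrow>\<^sub>L real. norm f = 1 \<longrightarrow> norm g = 1 \<longrightarrow>
      \<tau> \<le> norm (f - g) \<longrightarrow> norm (f + g) \<le> 2 - 2 * \<delta>" by blast
qed

lemma uniformly_convex_dual_imp_F_eps_shrinks:
  assumes uc: "uniformly_convex_eps_delta TYPE('a::real_normed_vector \<Rightarrow>\<^sub>L real)" and "\<epsilon> > 0"
  shows "\<exists>\<delta>>0. F_eps (X :: 'a itself) \<epsilon> \<subseteq> cball 0 (1 - \<delta>)"
proof -
  obtain \<eta> where "0 < \<eta>" "\<eta> \<le> 1" and \<eta>: "\<And>f g :: 'a \<Rightarrow>\<^sub>L real. norm f \<le> 1 \<Longrightarrow> norm g \<le> 1 \<Longrightarrow>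
      2 - \<eta> < norm (f + g) \<Longrightarrow> norm (f - g) < \<epsilon> / 2"
    using uniformly_convex_eps_delta_ball[OF uc, of "\<epsilon> / 2"] \<open>\<epsilon> > 0\<close> by auto
  define \<alpha> where "\<alpha> = 1 - \<eta> / 4"
  have "g \<in> cball 0 \<alpha>" if "g \<in> F_eps X \<epsilon>" for g
  proof (rule ccontr)
    assume "g \<notin> cball 0 \<alpha>"
    then obtain x where x: "norm x = 1" "\<alpha> < g x"
      using exists_unit_vector_apply_gt[of \<alpha> g] \<open>\<eta> \<le> 1\<close> by (auto simp: \<alpha>_def)
    have "diameter (wslice x \<alpha>) \<le> \<epsilon> / 2"
      using diameter_wslice_le[OF \<eta> x(1)] \<open>\<epsilon> > 0\<close> \<open>0 < \<eta>\<close> by (simp add: \<alpha>_def)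
    moreover have "g \<in> wslice x \<alpha>" "0 < \<alpha>" "\<alpha> < 1"
      using that x \<open>0 < \<eta>\<close> \<open>\<eta> \<le> 1\<close> by (auto simp: F_eps_def \<alpha>_def)
    ultimately have "g \<in> \<Union> {S. \<exists>(x::'a) \<alpha>. norm x = 1 \<and> 0 < \<alpha> \<and> \<alpha> < 1 \<and>
        S = wslice x \<alpha> \<and> diameter S < \<epsilon>}"
      using x(1) \<open>\<epsilon> > 0\<close> by (intro UnionI[of "wslice x \<alpha>"] CollectI exI[of _ x] exI[of _ \<alpha>]) auto
    then show False using that unfolding F_eps_def by blast
  qed
  then have "F_eps X \<epsilon> \<subseteq> cball 0 (1 - \<eta> / 4)" unfolding \<alpha>_def by blast
  then show ?thesis using \<open>0 < \<eta>\<close> by (intro exI[of _ "\<eta> / 4"]) simp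
qed

text \<open>The midpoint \<open>(f + g)/2\<close>, being long, lies outside \<open>F_eps X (\<tau>/2)\<close> and hence in a slice of
  diameter \<open>< \<tau>/2\<close>; that slice also contains \<open>f\<close> or \<open>g\<close>, both at distance \<open>norm (f - g) / 2\<close>
  from the midpoint.\<close>
lemma F_eps_shrinks_imp_uniformly_convex_dual:
  assumes shrinks: "\<And>\<epsilon>. \<epsilon> > 0 \<Longrightarrow> \<exists>\<delta>>0. F_eps (X :: 'a::real_normed_vector itself) \<epsilon> \<subseteq> cball 0 (1 - \<delta>)"
  shows "uniformly_convex_eps_delta TYPE('a \<Rightarrow>\<^sub>L real)"
  unfolding uniformly_convex_eps_delta_def
proof (intro allI impI)
  fix \<tau> :: real assume "\<tau> > 0"
  then obtain \<delta> where "\<delta> > 0" and \<delta>: "F_eps X (\<tau> / 2) \<subseteq> cball 0 (1 - \<delta>)"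
    using shrinks[of "\<tau> / 2"] by auto
  have "norm (f + g) \<le> 2 - 2 * (\<delta> / 2)"
    if f: "norm f = 1" and g: "norm g = 1" and fg: "\<tau> \<le> norm (f - g)" for f g :: "'a \<Rightarrow>\<^sub>L real"
  proof (rule ccontr)
    assume long: "\<not> ?thesis"
    define m where "m = (1/2) *\<^sub>R (f + g)"
    have "norm m \<le> 1" "1 - \<delta> < norm m"
      using long norm_triangle_ineq[of f g] f g by (simp_all add: m_def)
    then have "m \<notin> F_eps X (\<tau> / 2)" using \<delta> by auto
    then obtain x \<alpha> where x: "norm x = 1" "m \<in> wslice x \<alpha>" "diameter (wslice x \<alpha>) < \<tau> / 2"
      using \<open>norm m \<le> 1\<close> unfolding F_eps_def by auto
    have "f x + g x = 2 * m x" by (simp add: m_def blinfun.add_left blinfun.scaleR_left)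
    then have "\<alpha> < f x \<or> \<alpha> < g x" using x(2) by auto
    then obtain p where p: "p = f \<or> p = g" "\<alpha> < p x" by blast
    have "p \<in> wslice x \<alpha>" using p f g by auto
    then have "dist p m < \<tau> / 2" using dist_le_diameter_wslice x by fastforce
    moreover have "f - m = (1/2) *\<^sub>R (f - g)" "g - m = - ((1/2) *\<^sub>R (f - g))"
      by (simp_all add: m_def algebra_simps flip: scaleR_add_left)
    then have "dist p m = norm (f - g) / 2" using p(1) by (auto simp: dist_norm)
    ultimately show False using fg by simp
  qed
  then show "\<exists>\<delta>>0. \<forall>f g :: 'a \<Rightarrow>\<^sub>L real. norm f = 1 \<longrightarrow> norm g = 1 \<longrightarrow>
      \<tau> \<le> norm (f - g) \<longrightarrow> norm (f + g) \<le> 2 - 2 * \<delta>"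
    using \<open>\<delta> > 0\<close> by (intro exI[of _ "\<delta> / 2"]) auto
qed

section \<open>Condition (a)\<close>

text \<open>\<open>wstar_denting_point m x t c\<close> says that \<open>x\<close> witnesses \<open>s*(m, x, t) \<ge> c\<close>.\<close>
definition wstar_denting_point :: "('a::real_normed_vector \<Rightarrow>\<^sub>L real) \<Rightarrow> 'a \<Rightarrow> real \<Rightarrow> real \<Rightarrow> bool" where
  "wstar_denting_point m x t c \<longleftrightarrow> norm x = 1 \<and>
     (\<forall>h :: 'a \<Rightarrow>\<^sub>L real. blinfun_apply h x = 0 \<longrightarrow> t / 4 \<le> norm h \<longrightarrow> 1 + c \<le> norm (m + h))"

definition uniformly_wstar_denting :: "'a::real_normed_vector itself \<Rightarrow> bool" where
  "uniformly_wstar_denting _ \<longleftrightarrow> (\<forall>t. 0 < t \<and> t < 2 \<longrightarrow>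
     (\<exists>c>0. \<forall>m :: 'a \<Rightarrow>\<^sub>L real. norm m = 1 \<longrightarrow> (\<exists>x. wstar_denting_point m x t c)))"

lemma ereal_le_s_star_iff:
  "ereal c \<le> s_star m x t \<longleftrightarrow>
     (\<forall>h. blinfun_apply h x = 0 \<longrightarrow> t / 4 \<le> norm h \<longrightarrow> 1 + c \<le> norm (m + h))"
  unfolding s_star_def le_INF_iff by auto

lemma d_star_pos_iff_uniformly_wstar_denting:
  "(\<forall>t. 0 < t \<and> t < 2 \<longrightarrow> d_star X t > 0) \<longleftrightarrow> uniformly_wstar_denting (X :: 'a::real_normed_vector itself)"
proof -
  have "0 < d_star X t \<longleftrightarrow>
      (\<exists>c>0. \<forall>m :: 'a \<Rightarrow>\<^sub>L real. norm m = 1 \<longrightarrow> (\<exists>x. wstar_denting_point m x t c))" for t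
  proof
    assume "0 < d_star X t"
    then obtain c where "0 < ereal c" "ereal c < d_star X t" using ereal_dense2 by blast
    moreover have "\<exists>x. wstar_denting_point m x t c"
      if "ereal c < d_star X t" "norm m = 1" for m :: "'a \<Rightarrow>\<^sub>L real"
    proof -
      have "ereal c < d_star_f m t" using less_INF_D[OF that(1)[unfolded d_star_def]] that(2) by simp
      then obtain x where "norm x = 1" "ereal c < s_star m x t"
        unfolding d_star_f_def by (auto simp: less_SUP_iff)
      then show ?thesis
        unfolding wstar_denting_point_def by (metis ereal_le_s_star_iff less_imp_le)
    qed
    ultimately show "\<exists>c>0. \<forall>m :: 'a \<Rightarrow>\<^sub>L real. norm m = 1 \<longrightarrow> (\<exists>x. wstar_denting_point m x t c)"
      by auto
  next
    assume "\<exists>c>0. \<forall>m :: 'a \<Rightarrow>\<^sub>L real. norm m = 1 \<longrightarrow> (\<exists>x. wstar_denting_point m x t c)"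
    then obtain c where "c > 0"
      and c: "\<And>m :: 'a \<Rightarrow>\<^sub>L real. norm m = 1 \<Longrightarrow> \<exists>x. wstar_denting_point m x t c" by blast
    have "ereal c \<le> d_star_f m t" if m1: "norm m = 1" for m :: "'a \<Rightarrow>\<^sub>L real"
    proof -
      obtain x where "norm x = 1" "ereal c \<le> s_star m x t"
        using c[OF m1] unfolding wstar_denting_point_def ereal_le_s_star_iff by blast
      then show ?thesis unfolding d_star_f_def by (force intro: SUP_upper2)
    qed
    then have "ereal c \<le> d_star X t" unfolding d_star_def by (auto intro: INF_greatest)
    then show "0 < d_star X t"
      using \<open>c > 0\<close> by (metis ereal_less(2) order_less_le_trans zero_ereal_def)
  qed
  then show ?thesis unfolding uniformly_wstar_denting_def by simp
qed

lemma norm_diff_normalized_perturbation_ge: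
  fixes m h :: "'b::real_normed_vector"
  assumes "norm m = 1" and "0 < r" and "\<bar>r - 1\<bar> < \<eta>" and "\<eta> \<le> t / 16" and "t \<le> 2"
    and "t / 4 \<le> norm h"
  shows "t / 8 \<le> norm (m - (1 / r) *\<^sub>R (m + h))"
proof -
  have "norm h \<le> norm ((r - 1) *\<^sub>R m - h) + \<bar>r - 1\<bar>"
    using norm_triangle_ineq4[of "(r - 1) *\<^sub>R m" "(r - 1) *\<^sub>R m - h"] assms(1)
    by (simp add: norm_minus_commute)
  moreover have "(t / 8) * r \<le> t / 4 - \<eta>"
  proof -
    have "(t / 8) * r \<le> (t / 8) * (1 + \<eta>)"
      using assms(3-5) by (intro mult_left_mono) auto
    also have "\<dots> \<le> t / 8 + \<eta> / 4"
      using mult_right_mono[of t 2 \<eta>] assms(3,5) by (simp add: algebra_simps)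
    finally show ?thesis using assms(3,4) by linarith
  qed
  ultimately have "(t / 8) * r \<le> norm ((r - 1) *\<^sub>R m - h)" using assms(3,6) by linarith
  moreover have "m - (1 / r) *\<^sub>R (m + h) = (1 / r) *\<^sub>R ((r - 1) *\<^sub>R m - h)"
    using assms(2) by (simp add: algebra_simps)
  then have "norm (m - (1 / r) *\<^sub>R (m + h)) = norm ((r - 1) *\<^sub>R m - h) / r"
    using assms(2) by simp
  ultimately show ?thesis using assms(2) by (simp add: pos_le_divide_eq)
qed

text \<open>If \<open>m + h\<close> were short, its normalization \<open>g\<close> would be far from \<open>m\<close> although \<open>m + g\<close>
  nearly attains the norm \<open>2\<close> at a point where \<open>m\<close> nearly attains its norm.\<close>
lemma uniformly_convex_dual_imp_uniformly_wstar_denting: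
  assumes uc: "uniformly_convex_eps_delta TYPE('a::real_normed_vector \<Rightarrow>\<^sub>L real)"
  shows "uniformly_wstar_denting (X :: 'a itself)"
  unfolding uniformly_wstar_denting_def
proof (intro allI impI)
  fix t :: real assume t: "0 < t \<and> t < 2"
  obtain \<delta> where "\<delta> > 0" and \<delta>: "\<And>f g :: 'a \<Rightarrow>\<^sub>L real. norm f = 1 \<Longrightarrow> norm g = 1 \<Longrightarrow>
      t / 8 \<le> norm (f - g) \<Longrightarrow> norm (f + g) \<le> 2 - 2 * \<delta>"
    using uc t unfolding uniformly_convex_eps_delta_def by (metis divide_pos_pos zero_less_numeral)
  define \<eta> where "\<eta> = min (\<delta> / 2) (t / 16)"
  have \<eta>: "0 < \<eta>" "\<eta> \<le> \<delta> / 2" "\<eta> \<le> t / 16" "\<eta> < 1"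
    using \<open>\<delta> > 0\<close> t unfolding \<eta>_def by auto
  have "1 + \<eta> \<le> norm (m + h)"
    if m: "norm m = 1" and x: "norm x = 1" "1 - \<eta> < m x" and h: "h x = 0" "t / 4 \<le> norm h"
    for m h :: "'a \<Rightarrow>\<^sub>L real" and x
  proof (rule ccontr)
    define r where "r = norm (m + h)"
    assume "\<not> 1 + \<eta> \<le> norm (m + h)"
    moreover have "m x \<le> r" using blinfun_apply_unit_le(1)[OF x(1), of "m + h"] h(1)
      by (simp add: r_def blinfun.add_left)
    ultimately have r: "r < 1 + \<eta>" "1 - \<eta> < r" "0 < r" using x(2) \<eta>(4) by (auto simp: r_def)
    define g where "g = (1 / r) *\<^sub>R (m + h)"
    have "norm g = 1" using r(3) by (simp add: g_def r_def)
    have "t / 8 \<le> norm (m - g)"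
      unfolding g_def by (rule norm_diff_normalized_perturbation_ge) (use m r \<eta> t h in auto)
    then have "norm (m + g) \<le> 2 - 2 * \<delta>" using \<delta>[OF m \<open>norm g = 1\<close>] by blast
    moreover have "(m + g) x = m x + m x / r" using h(1) by (simp add: g_def blinfun.add_left blinfun.scaleR_left)
    moreover have "1 - 2 * \<eta> \<le> m x / r"
    proof -
      have "(1 - 2 * \<eta>) * r \<le> (1 - 2 * \<eta>) * (1 + \<eta>)" using r \<eta> t by (intro mult_left_mono) auto
      also have "\<dots> = 1 - \<eta> - 2 * (\<eta> * \<eta>)" by (simp add: algebra_simps)
      also have "\<dots> \<le> m x" using x(2) zero_le_square[of \<eta>] by linarith
      finally show ?thesis using r(3) by (simp add: pos_le_divide_eq)
    qed
    moreover have "(m + g) x \<le> norm (m + g)" using blinfun_apply_unit_le(1)[OF x(1)] .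
    ultimately show False using x(2) \<eta> by linarith
  qed
  moreover have "\<exists>x. norm x = 1 \<and> 1 - \<eta> < m x" if "norm m = 1" for m :: "'a \<Rightarrow>\<^sub>L real"
    using exists_unit_vector_apply_gt[of "1 - \<eta>" m] that \<eta>(1,4) by auto
  ultimately show "\<exists>c>0. \<forall>m :: 'a \<Rightarrow>\<^sub>L real. norm m = 1 \<longrightarrow> (\<exists>x. wstar_denting_point m x t c)"
    using \<eta>(1) unfolding wstar_denting_point_def by meson
qed

lemma wstar_denting_point_value_large:
  fixes m :: "'a::real_normed_vector \<Rightarrow>\<^sub>L real"
  assumes "norm m = 1" and "wstar_denting_point m x t c" and "0 \<le> c" and "0 \<le> t"
  shows "1 - t / 4 \<le> \<bar>m x\<bar>"
proof (rule ccontr)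
  assume small: "\<not> 1 - t / 4 \<le> \<bar>m x\<bar>"
  have "norm x = 1"
    and denting: "\<And>h. blinfun_apply h x = 0 \<Longrightarrow> t / 4 \<le> norm h \<Longrightarrow> 1 + c \<le> norm (m + h)"
    using assms(2) unfolding wstar_denting_point_def by blast+
  obtain \<phi> :: "'a \<Rightarrow>\<^sub>L real" where \<phi>: "norm \<phi> \<le> 1" "\<phi> x = 1"
    using exists_norming_functional[of x] \<open>norm x = 1\<close> by metis
  \<comment> \<open>\<open>h\<close> vanishes at \<open>x\<close>, is not small, and \<open>m + h = m x \<cdot> \<phi>\<close> is short\<close>
  define h where "h = m x *\<^sub>R \<phi> - m"
  have "h x = 0" using \<phi>(2) by (simp add: h_def blinfun.diff_left blinfun.scaleR_left)
  have "norm (m x *\<^sub>R \<phi>) \<le> \<bar>m x\<bar>" using \<phi>(1) by (simp add: mult_left_le)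
  moreover have "norm m \<le> norm h + norm (m x *\<^sub>R \<phi>)"
    using norm_triangle_ineq4[of "m x *\<^sub>R \<phi>" h] by (simp add: h_def)
  ultimately have "t / 4 \<le> norm h" using assms(1) small by linarith
  then have "1 + c \<le> norm (m x *\<^sub>R \<phi>)" using denting[OF \<open>h x = 0\<close>] by (simp add: h_def)
  then show False using \<open>norm (m x *\<^sub>R \<phi>) \<le> \<bar>m x\<bar>\<close> small assms(3,4) by linarith
qed

lemma wstar_denting_coefficient_bound:
  fixes m p :: "'a::real_normed_vector \<Rightarrow>\<^sub>L real"
  assumes "wstar_denting_point m y t c" and "1 / 2 \<le> \<bar>m y\<bar>" and "norm p = 1" and "0 \<le> t"
    and far: "t / 2 \<le> norm (p - (p y / m y) *\<^sub>R m)"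
  shows "\<bar>p y / m y\<bar> * (1 + c) \<le> 1"
proof (cases "p y = 0")
  case False
  have "norm y = 1"
    and denting: "\<And>h. blinfun_apply h y = 0 \<Longrightarrow> t / 4 \<le> norm h \<Longrightarrow> 1 + c \<le> norm (m + h)"
    using assms(1) unfolding wstar_denting_point_def by blast+
  define a where "a = p y / m y"
  have "a \<noteq> 0" using False assms(2) by (simp add: a_def)
  define k where "k = (1 / a) *\<^sub>R (p - a *\<^sub>R m)"
  have "k y = 0" using assms(2) by (simp add: k_def a_def blinfun.diff_left blinfun.scaleR_left)
  have "\<bar>a\<bar> \<le> 2"
    using blinfun_apply_unit_le(2)[OF \<open>norm y = 1\<close>, of p] assms(2,3) by (simp add: a_def abs_divide field_simps)
  then have "(t / 4) * \<bar>a\<bar> \<le> norm (p - a *\<^sub>R m)"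
    using far mult_left_mono[of "\<bar>a\<bar>" 2 "t / 4"] assms(4) by (simp add: a_def)
  then have "t / 4 \<le> norm k"
    using \<open>a \<noteq> 0\<close> by (simp add: k_def divide_simps mult.commute)
  then have "1 + c \<le> norm (m + k)" using denting[OF \<open>k y = 0\<close>] by blast
  moreover have "p = a *\<^sub>R (m + k)" using \<open>a \<noteq> 0\<close> by (simp add: k_def algebra_simps)
  then have "1 = \<bar>a\<bar> * norm (m + k)" using assms(3) by (metis norm_scaleR)
  ultimately show ?thesis by (metis a_def abs_ge_zero mult_left_mono)
qed simp

lemma add_eq_scaleR_imp_remainders_cancel:
  fixes f g m :: "'b::real_vector"
  assumes "f + g = (a + b) *\<^sub>R m"
  shows "g - b *\<^sub>R m = - (f - a *\<^sub>R m)"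
  using assms by (simp add: algebra_simps scaleR_add_left eq_neg_iff_add_eq_0)

lemma wstar_denting_coefficient_sum_le:
  fixes f g m :: "'a::real_normed_vector \<Rightarrow>\<^sub>L real"
  assumes denting: "wstar_denting_point m x t c" and "1 / 2 \<le> \<bar>m x\<bar>" and "0 \<le> t" and "0 < c"
    and "norm f = 1" and "norm g = 1"
    and "t / 2 \<le> norm (f - (f x / m x) *\<^sub>R m)" and "t / 2 \<le> norm (g - (g x / m x) *\<^sub>R m)"
  shows "(f x / m x + g x / m x) * (1 + c) \<le> 2"
proof -
  have "\<bar>f x / m x\<bar> * (1 + c) \<le> 1" "\<bar>g x / m x\<bar> * (1 + c) \<le> 1"
    using wstar_denting_coefficient_bound[OF denting assms(2)] assms(3,5-8) by auto
  moreover have "p * (1 + c) \<le> \<bar>p\<bar> * (1 + c)" for p :: real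
    using \<open>c > 0\<close> by (intro mult_right_mono) auto
  ultimately show ?thesis by (smt (verit) distrib_right)
qed

text \<open>Here \<open>f x / m x\<close> and \<open>g x / m x\<close> are the coefficients of \<open>f\<close> and \<open>g\<close> along \<open>m\<close>;
  they sum to \<open>s\<close>, so the two remainders cancel.\<close>
lemma norm_diff_lt_of_small_remainder:
  fixes f g m :: "'a::real_normed_vector \<Rightarrow>\<^sub>L real"
  assumes "norm x = 1" and "norm m = 1" and "1 - t / 4 \<le> \<bar>m x\<bar>" and "0 \<le> t" and "t \<le> 2"
    and "norm f = 1" and "norm g = 1" and "f + g = s *\<^sub>R m" and "2 - 2 * t < s"
    and small: "norm (f - (f x / m x) *\<^sub>R m) < t / 2"
  shows "norm (f - g) < 4 * t"
proof -
  define a where "a p = p x / m x" for p :: "'a \<Rightarrow>\<^sub>L real"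
  have "m x \<noteq> 0" using assms(3,5) by auto
  have "(f + g) x = s * m x" using assms(8) by (simp add: blinfun.scaleR_left)
  then have sum: "a f + a g = s" using \<open>m x \<noteq> 0\<close> by (simp add: a_def blinfun.add_left field_simps)
  then have cancel: "g - a g *\<^sub>R m = - (f - a f *\<^sub>R m)"
    using assms(8) by (intro add_eq_scaleR_imp_remainders_cancel) simp
  have "f - g = (a f - a g) *\<^sub>R m + (f - a f *\<^sub>R m) - (g - a g *\<^sub>R m)"
    by (simp add: algebra_simps)
  then have "f - g = (a f - a g) *\<^sub>R m + 2 *\<^sub>R (f - a f *\<^sub>R m)"
    unfolding cancel by (simp add: scaleR_2)
  then have "norm (f - g) \<le> \<bar>a f - a g\<bar> + 2 * norm (f - a f *\<^sub>R m)"
    using norm_triangle_ineq[of "(a f - a g) *\<^sub>R m" "2 *\<^sub>R (f - a f *\<^sub>R m)"] assms(2) by simp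
  moreover have "1 / \<bar>m x\<bar> \<le> 1 + t / 2"
  proof -
    have "1 \<le> (1 + t / 2) * (1 - t / 4)"
      using mult_left_mono[of t 2 t] assms(4,5) by (simp add: algebra_simps)
    also have "\<dots> \<le> (1 + t / 2) * \<bar>m x\<bar>" using assms(3,4) by (intro mult_left_mono) auto
    finally show ?thesis using \<open>m x \<noteq> 0\<close> by (simp add: divide_simps)
  qed
  moreover have "a p \<le> 1 / \<bar>m x\<bar>" if "norm p = 1" for p
  proof -
    have "\<bar>p x\<bar> / \<bar>m x\<bar> \<le> 1 / \<bar>m x\<bar>"
      using blinfun_apply_unit_le(2)[OF assms(1), of p] that by (intro divide_right_mono) auto
    then show ?thesis unfolding a_def by (metis abs_divide abs_ge_self order_trans)
  qed
  then have "a f \<le> 1 / \<bar>m x\<bar>" "a g \<le> 1 / \<bar>m x\<bar>" using assms(6,7) by blast+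
  ultimately show ?thesis using sum small assms(9) unfolding a_def by linarith
qed

text \<open>With \<open>m\<close> the direction of \<open>f + g\<close>, either both \<open>f\<close> and \<open>g\<close> are far from multiples of \<open>m\<close>
  and the denting property bounds \<open>norm (f + g)\<close>, or both are close and then so are \<open>f\<close> and \<open>g\<close>.\<close>
lemma wstar_denting_norm_add_le:
  fixes f g :: "'a::real_normed_vector \<Rightarrow>\<^sub>L real"
  assumes t: "0 < t" "t \<le> 1 / 8" and "0 < c"
    and dent: "\<And>m :: 'a \<Rightarrow>\<^sub>L real. norm m = 1 \<Longrightarrow> \<exists>x. wstar_denting_point m x t c"
    and f: "norm f = 1" and g: "norm g = 1" and fg: "8 * t \<le> norm (f - g)"
  shows "norm (f + g) \<le> 2 - 2 * min (c / (1 + c)) t"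
proof (rule ccontr)
  define s where "s = norm (f + g)"
  assume "\<not> norm (f + g) \<le> 2 - 2 * min (c / (1 + c)) t"
  then have s: "2 - 2 * t < s" "2 - 2 * (c / (1 + c)) < s" "0 < s"
    using t by (auto simp: s_def)
  define m where "m = (1 / s) *\<^sub>R (f + g)"
  have "norm m = 1" "f + g = s *\<^sub>R m" using s(3) by (simp_all add: m_def s_def)
  then obtain x where denting: "wstar_denting_point m x t c" using dent by blast
  then have "norm x = 1" by (simp add: wstar_denting_point_def)
  have mx: "1 - t / 4 \<le> \<bar>m x\<bar>"
    using wstar_denting_point_value_large[OF \<open>norm m = 1\<close> denting] \<open>c > 0\<close> t by simp
  then have "m x \<noteq> 0" using t by auto
  have "(f + g) x = s * m x" using \<open>f + g = s *\<^sub>R m\<close> by (simp add: blinfun.scaleR_left)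
  then have sum: "f x / m x + g x / m x = s"
    using \<open>m x \<noteq> 0\<close> by (simp add: blinfun.add_left field_simps)
  show False
  proof (cases "t / 2 \<le> norm (f - (f x / m x) *\<^sub>R m)")
    case True
    have cancel: "g - (g x / m x) *\<^sub>R m = - (f - (f x / m x) *\<^sub>R m)"
      using \<open>f + g = s *\<^sub>R m\<close> sum by (intro add_eq_scaleR_imp_remainders_cancel) simp
    have "t / 2 \<le> norm (g - (g x / m x) *\<^sub>R m)" using True unfolding cancel norm_minus_cancel .
    then have "s * (1 + c) \<le> 2"
      using wstar_denting_coefficient_sum_le[OF denting _ _ \<open>c > 0\<close> f g True] mx t sum by simp
    then show False using s(2) \<open>c > 0\<close> by (simp add: field_simps)
  next
    case False
    then have "norm (f - g) < 4 * t"
      using norm_diff_lt_of_small_remainder[OF \<open>norm x = 1\<close> \<open>norm m = 1\<close> mx _ _ f g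
        \<open>f + g = s *\<^sub>R m\<close> s(1)] t by simp
    then show False using fg t by simp
  qed
qed

lemma uniformly_wstar_denting_imp_uniformly_convex_dual:
  assumes "uniformly_wstar_denting (X :: 'a::real_normed_vector itself)"
  shows "uniformly_convex_eps_delta TYPE('a \<Rightarrow>\<^sub>L real)"
  unfolding uniformly_convex_eps_delta_def
proof (intro allI impI)
  fix \<tau> :: real assume "\<tau> > 0"
  define t where "t = min \<tau> 1 / 8"
  have t: "0 < t" "t \<le> 1 / 8" "8 * t \<le> \<tau>" using \<open>\<tau> > 0\<close> by (auto simp: t_def)
  obtain c where "c > 0" and c: "\<And>m :: 'a \<Rightarrow>\<^sub>L real. norm m = 1 \<Longrightarrow> \<exists>x. wstar_denting_point m x t c"
    using assms t unfolding uniformly_wstar_denting_def by fastforce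
  have "norm (f + g) \<le> 2 - 2 * min (c / (1 + c)) t"
    if "norm f = 1" "norm g = 1" "\<tau> \<le> norm (f - g)" for f g :: "'a \<Rightarrow>\<^sub>L real"
    using wstar_denting_norm_add_le[OF t(1,2) \<open>c > 0\<close> c] that t(3) by simp
  moreover have "min (c / (1 + c)) t > 0" using \<open>c > 0\<close> t by simp
  ultimately show "\<exists>\<delta>>0. \<forall>f g :: 'a \<Rightarrow>\<^sub>L real. norm f = 1 \<longrightarrow> norm g = 1 \<longrightarrow>
      \<tau> \<le> norm (f - g) \<longrightarrow> norm (f + g) \<le> 2 - 2 * \<delta>" by blast
qed

section \<open>Condition (e)\<close>

text \<open>A functional norming \<open>R u - c\<close> almost attains its norm at \<open>u\<close>, so by uniform convexity it
  is close to \<open>f\<close>, and therefore large at \<open>c\<close>.\<close>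
lemma uniformly_convex_dist_far_point_le:
  fixes f :: "'a::real_normed_vector \<Rightarrow>\<^sub>L real"
  assumes close: "\<And>k :: 'a \<Rightarrow>\<^sub>L real. norm k \<le> 1 \<Longrightarrow> 2 - \<eta> < norm (k + f) \<Longrightarrow> norm (k - f) < \<epsilon> / (4 * M)"
    and "norm f = 1" and "norm u = 1" and "1 - \<eta> / 2 < f u"
    and "0 < \<eta>" and "0 < M" and "4 * M / \<eta> \<le> R"
    and "norm c \<le> M" and "\<epsilon> \<le> f c"
  shows "norm (R *\<^sub>R u - c) \<le> R - 3 * \<epsilon> / 4"
proof -
  obtain k :: "'a \<Rightarrow>\<^sub>L real" where k: "norm k \<le> 1" "k (R *\<^sub>R u - c) = norm (R *\<^sub>R u - c)"
    by (rule exists_norming_functional)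
  have "0 < 4 * M / \<eta>" using assms(5,6) by simp
  then have "R > 0" using assms(7) by linarith
  have "\<bar>k c\<bar> \<le> norm k * norm c" using norm_blinfun[of k c] by simp
  also have "\<dots> \<le> 1 * M" using k(1) assms(8) by (intro mult_mono) auto
  finally have "\<bar>k c\<bar> \<le> M" by simp
  moreover have "R - M \<le> norm (R *\<^sub>R u - c)"
    using norm_triangle_ineq2[of "R *\<^sub>R u" c] assms(3,8) \<open>R > 0\<close> by simp
  ultimately have "R - 2 * M \<le> R * k u" using k(2) by (simp add: blinfun.diff_right blinfun.scaleR_right)
  moreover have "2 * M \<le> R * (\<eta> / 2)" using assms(5,7) by (simp add: field_simps)
  ultimately have "R * (1 - \<eta> / 2) \<le> R * k u" by (simp add: algebra_simps)
  then have "1 - \<eta> / 2 \<le> k u" using \<open>R > 0\<close> by simp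
  then have "2 - \<eta> < (k + f) u" using assms(4) by (simp add: blinfun.add_left)
  also have "\<dots> \<le> norm (k + f)" using blinfun_apply_unit_le(1)[OF assms(3)] .
  finally have "norm (k - f) < \<epsilon> / (4 * M)" using close k(1) by blast
  then have "\<bar>(k - f) c\<bar> \<le> \<epsilon> / (4 * M) * M"
    using norm_blinfun[of "k - f" c] assms(8)
    by (smt (verit, best) mult_mono norm_ge_zero real_norm_def)
  then have "- (k - f) c \<le> \<epsilon> / 4" using assms(6) by simp
  then have "3 * \<epsilon> / 4 \<le> k c" using assms(9) by (simp add: blinfun.diff_left)
  moreover have "k u \<le> 1" using blinfun_apply_unit_le(1)[OF assms(3), of k] k(1) by linarith
  then have "R * k u \<le> R" using \<open>R > 0\<close> by (simp add: mult_left_le)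
  ultimately show ?thesis using k(2) by (simp add: blinfun.diff_right blinfun.scaleR_right)
qed

text \<open>The ball is centred far out in a direction \<open>u\<close> where \<open>f\<close> almost attains its norm; its
  radius is at most \<open>R\<close>, whatever the set \<open>C\<close>.\<close>
lemma uniformly_convex_bounded_set_in_far_ball:
  fixes f :: "'a::real_normed_vector \<Rightarrow>\<^sub>L real"
  assumes close: "\<And>k :: 'a \<Rightarrow>\<^sub>L real. norm k \<le> 1 \<Longrightarrow> 2 - \<eta> < norm (k + f) \<Longrightarrow> norm (k - f) < \<epsilon> / (4 * M)"
    and "norm f = 1" and "0 < \<eta>" and "\<eta> \<le> 1" and "0 < \<epsilon>" and "1 \<le> M"
    and "\<epsilon> \<le> R" and "4 * M / \<eta> \<le> R"
    and CM: "\<forall>x\<in>C. norm x \<le> M" and Cf: "\<forall>x\<in>C. \<epsilon> \<le> f x"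
  shows "\<exists>x0 r0. 0 \<le> r0 \<and> C \<subseteq> cball x0 r0 \<and> (\<forall>y\<in>cball x0 r0. \<epsilon> / 2 \<le> f y) \<and> r0 \<le> R"
proof -
  have "R > 0" using assms(5,7) by linarith
  define \<eta>' where "\<eta>' = min (\<eta> / 2) (\<epsilon> / (4 * R))"
  have "0 \<le> 1 - \<eta>'" "1 - \<eta>' < norm f" using assms(2-5) \<open>R > 0\<close> by (auto simp: \<eta>'_def)
  then obtain u where u: "norm u = 1" "1 - \<eta>' < f u" by (rule exists_unit_vector_apply_gt)
  have "R * (1 - \<eta>') < R * f u" using u(2) \<open>R > 0\<close> by simp
  moreover have "R * \<eta>' \<le> \<epsilon> / 4"
    using \<open>R > 0\<close> mult_left_mono[of \<eta>' "\<epsilon> / (4 * R)" R] by (simp add: \<eta>'_def)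
  ultimately have Ru: "R - \<epsilon> / 4 < R * f u" by (simp add: algebra_simps)
  have "f u \<le> 1" using blinfun_apply_unit_le(1)[OF u(1), of f] assms(2) by simp
  then have "R * f u \<le> R" using \<open>R > 0\<close> by (simp add: mult_left_le)
  define r0 where "r0 = R * f u - \<epsilon> / 2"
  have "C \<subseteq> cball (R *\<^sub>R u) r0"
  proof
    fix c assume "c \<in> C"
    have "norm (R *\<^sub>R u - c) \<le> R - 3 * \<epsilon> / 4"
    proof (rule uniformly_convex_dist_far_point_le[OF close assms(2) u(1) _ assms(3) _ assms(8)])
      show "1 - \<eta> / 2 < f u" using u(2) by (simp add: \<eta>'_def)
    qed (use \<open>1 \<le> M\<close> CM Cf \<open>c \<in> C\<close> in auto)
    then show "c \<in> cball (R *\<^sub>R u) r0" using Ru by (simp add: dist_norm r0_def)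
  qed
  moreover have "\<epsilon> / 2 \<le> f y" if "y \<in> cball (R *\<^sub>R u) r0" for y
    using blinfun_apply_le_add_dist[of f "R *\<^sub>R u" y] assms(2) that
    by (simp add: r0_def blinfun.scaleR_right)
  moreover have "0 \<le> r0" using Ru assms(5,7) unfolding r0_def by linarith
  moreover have "r0 \<le> R" using \<open>R * f u \<le> R\<close> assms(5) unfolding r0_def by linarith
  ultimately show ?thesis by blast
qed

lemma uniformly_convex_dual_imp_H_UMIP:
  assumes uc: "uniformly_convex_eps_delta TYPE('a::real_normed_vector \<Rightarrow>\<^sub>L real)"
  shows "H_UMIP (X :: 'a itself)"
  unfolding H_UMIP_def
proof (intro allI impI)
  fix \<epsilon> M :: real assume "\<epsilon> > 0" "M \<ge> 1"
  then obtain \<eta> where "0 < \<eta>" "\<eta> \<le> 1" and close: "\<And>f g :: 'a \<Rightarrow>\<^sub>L real. norm f \<le> 1 \<Longrightarrow> norm g \<le> 1 \<Longrightarrow>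
      2 - \<eta> < norm (f + g) \<Longrightarrow> norm (f - g) < \<epsilon> / (4 * M)"
    using uniformly_convex_eps_delta_ball[OF uc, of "\<epsilon> / (4 * M)"] by auto
  define R where "R = max \<epsilon> (4 * M / \<eta>)"
  have "\<exists>x0 r0. 0 \<le> r0 \<and> C \<subseteq> cball x0 r0 \<and> (\<forall>y\<in>cball x0 r0. \<epsilon> / 2 \<le> f y) \<and> r0 \<le> R"
    if "norm f = 1" "\<forall>x\<in>C. norm x \<le> M" "\<forall>x\<in>C. \<epsilon> \<le> f x" for C and f :: "'a \<Rightarrow>\<^sub>L real"
    using close \<open>0 < \<eta>\<close> \<open>\<eta> \<le> 1\<close> \<open>\<epsilon> > 0\<close> \<open>M \<ge> 1\<close> that
    by (intro uniformly_convex_bounded_set_in_far_ball) (auto simp: R_def)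
  moreover have "R > 0" using \<open>\<epsilon> > 0\<close> by (simp add: R_def)
  ultimately show "\<exists>K>0. \<forall>(C::'a set) (f::'a \<Rightarrow>\<^sub>L real).
        closed C \<and> convex C \<and> norm f = 1 \<and> (\<forall>x\<in>C. norm x \<le> M) \<and> (\<forall>x\<in>C. \<epsilon> \<le> blinfun_apply f x) \<longrightarrow>
        (\<exists>x0 r0. 0 \<le> r0 \<and> C \<subseteq> cball x0 r0 \<and>
           (\<forall>y\<in>cball x0 r0. \<epsilon> / 2 \<le> blinfun_apply f y) \<and> r0 \<le> K)"
    by blast
qed

lemma H_UMIP_segment_ball:
  assumes "H_UMIP (X :: 'a::real_normed_vector itself)" and "M \<ge> 1"
  obtains K where "K > 0"
    and "\<And>(\<phi> :: 'a \<Rightarrow>\<^sub>L real) a b. norm \<phi> = 1 \<Longrightarrow> norm a \<le> M \<Longrightarrow> norm b \<le> M \<Longrightarrow>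
      1 \<le> blinfun_apply \<phi> a \<Longrightarrow> 1 \<le> blinfun_apply \<phi> b \<Longrightarrow>
      \<exists>x0 r0. r0 \<le> K \<and> dist x0 a \<le> r0 \<and> dist x0 b \<le> r0 \<and> r0 + 1 / 2 \<le> blinfun_apply \<phi> x0"
proof -
  obtain K where "K > 0" and K: "\<And>(C :: 'a set) (\<phi> :: 'a \<Rightarrow>\<^sub>L real).
      closed C \<Longrightarrow> convex C \<Longrightarrow> norm \<phi> = 1 \<Longrightarrow> \<forall>x\<in>C. norm x \<le> M \<Longrightarrow> \<forall>x\<in>C. 1 \<le> blinfun_apply \<phi> x \<Longrightarrow>
      \<exists>x0 r0. 0 \<le> r0 \<and> C \<subseteq> cball x0 r0 \<and> (\<forall>y\<in>cball x0 r0. 1 / 2 \<le> blinfun_apply \<phi> y) \<and> r0 \<le> K"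
    using assms unfolding H_UMIP_def by (metis zero_less_one)
  have "\<exists>x0 r0. r0 \<le> K \<and> dist x0 a \<le> r0 \<and> dist x0 b \<le> r0 \<and> r0 + 1 / 2 \<le> \<phi> x0"
    if H: "norm \<phi> = 1" "norm a \<le> M" "norm b \<le> M" "1 \<le> \<phi> a" "1 \<le> \<phi> b" for \<phi> :: "'a \<Rightarrow>\<^sub>L real" and a b
  proof -
    have "closed_segment a b \<subseteq> cball 0 M"
      using H(2,3) by (intro closed_segment_subset) auto
    moreover have "closed_segment a b \<subseteq> blinfun_apply \<phi> -` {1..}"
      using H(4,5) convex_linear_vimage[OF bounded_linear.linear[OF blinfun.bounded_linear_right], of "{1..}" \<phi>]
      by (intro closed_segment_subset) auto
    ultimately obtain x0 r0 where "0 \<le> r0" "r0 \<le> K" "closed_segment a b \<subseteq> cball x0 r0"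
      and "\<forall>y\<in>cball x0 r0. 1 / 2 \<le> \<phi> y"
      using K[of "closed_segment a b" \<phi>] H(1) by (auto simp: subset_iff)
    moreover have "1 / 2 \<le> \<phi> x0 - r0"
      using cball_functional_lower_bound[OF H(1) \<open>0 \<le> r0\<close>] \<open>\<forall>y\<in>cball x0 r0. 1 / 2 \<le> \<phi> y\<close> by blast
    moreover have "a \<in> closed_segment a b" "b \<in> closed_segment a b" by auto
    ultimately show ?thesis by (intro exI[of _ x0] exI[of _ r0]) (auto simp: subset_iff)
  qed
  then show ?thesis using that \<open>K > 0\<close> by blast
qed

lemma exists_splitting_vector:
  fixes f g :: "'a::real_normed_vector \<Rightarrow>\<^sub>L real"
  assumes "norm f = 1" and "norm g = 1" and "norm w = 1" and "norm z = 1"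
    and "1 - e \<le> f w" and "1 - e \<le> g w" and "\<tau> / 2 < (f - g) z"
  obtains u where "norm u \<le> 2" and "\<tau> / 4 - e \<le> f u" and "g u \<le> e - \<tau> / 4"
    and "\<bar>f u + g u\<bar> \<le> 2 * e"
proof
  define \<beta> where "\<beta> = (f z + g z) / 2"
  have "\<bar>\<beta>\<bar> \<le> 1"
    using blinfun_apply_unit_le(2)[OF assms(4), of f] blinfun_apply_unit_le(2)[OF assms(4), of g] assms(1,2)
    by (simp add: \<beta>_def abs_le_iff)
  have "f w \<le> 1" "g w \<le> 1" using blinfun_apply_unit_le(1)[OF assms(3)] assms(1,2) by metis+
  then have "\<bar>\<beta>\<bar> * \<bar>1 - f w\<bar> \<le> 1 * e" "\<bar>\<beta>\<bar> * \<bar>1 - g w\<bar> \<le> 1 * e"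
    using \<open>\<bar>\<beta>\<bar> \<le> 1\<close> assms(5,6) by (intro mult_mono; simp)+
  then have "\<bar>\<beta> * (1 - f w)\<bar> \<le> e" "\<bar>\<beta> * (1 - g w)\<bar> \<le> e" by (simp_all add: abs_mult)
  define u where "u = z - \<beta> *\<^sub>R w"
  show "norm u \<le> 2"
    using norm_triangle_ineq4[of z "\<beta> *\<^sub>R w"] \<open>\<bar>\<beta>\<bar> \<le> 1\<close> assms(3,4) by (simp add: u_def)
  have fu: "f u = (f z - g z) / 2 + \<beta> * (1 - f w)" and gu: "g u = (g z - f z) / 2 + \<beta> * (1 - g w)"
    by (simp_all add: u_def \<beta>_def blinfun.diff_right blinfun.scaleR_right field_simps)
  have "f z - g z > \<tau> / 2" using assms(7) by (simp add: blinfun.diff_left)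
  then show "\<tau> / 4 - e \<le> f u"
    unfolding fu using abs_le_D2[OF \<open>\<bar>\<beta> * (1 - f w)\<bar> \<le> e\<close>] by argo
  show "g u \<le> e - \<tau> / 4"
    unfolding gu using \<open>f z - g z > \<tau> / 2\<close> abs_le_D1[OF \<open>\<bar>\<beta> * (1 - g w)\<bar> \<le> e\<close>] by argo
  have "f u + g u = \<beta> * (1 - f w) + \<beta> * (1 - g w)" by (simp add: fu gu field_simps)
  then show "\<bar>f u + g u\<bar> \<le> 2 * e"
    using abs_triangle_ineq[of "\<beta> * (1 - f w)" "\<beta> * (1 - g w)"]
      \<open>\<bar>\<beta> * (1 - f w)\<bar> \<le> e\<close> \<open>\<bar>\<beta> * (1 - g w)\<bar> \<le> e\<close> by linarith
qed

lemma exists_test_segment: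
  fixes f g \<phi> :: "'a::real_normed_vector \<Rightarrow>\<^sub>L real"
  assumes "norm f = 1" and "norm g = 1" and "\<tau> \<le> norm (f - g)" and "0 < \<tau>" and "\<kappa> * \<tau> = 16"
    and \<phi>: "\<And>v. s * \<phi> v = f v + g v" and "1 \<le> s"
    and w: "norm w = 1" "1 - 4 * \<delta> \<le> f w" "1 - 4 * \<delta> \<le> g w" "1 - \<delta> < \<phi> w"
  obtains a b where "norm a \<le> 3 + 2 * \<kappa>" and "norm b \<le> 3 + 2 * \<kappa>"
    and "3 - (3 + 8 * \<kappa>) * \<delta> \<le> \<phi> a" and "3 - (3 + 8 * \<kappa>) * \<delta> \<le> \<phi> b"
    and "f a \<le> 4 * \<kappa> * \<delta> - 1" and "g b \<le> 4 * \<kappa> * \<delta> - 1"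
proof -
  have "\<kappa> > 0" using assms(4,5) by (metis zero_less_mult_pos2 zero_less_numeral)
  obtain z where "norm z = 1" "\<tau> / 2 < (f - g) z"
    using exists_unit_vector_apply_gt[of "\<tau> / 2" "f - g"] assms(3,4) by auto
  then obtain u where u: "norm u \<le> 2" "\<tau> / 4 - 4 * \<delta> \<le> f u" "g u \<le> 4 * \<delta> - \<tau> / 4"
    "\<bar>f u + g u\<bar> \<le> 2 * (4 * \<delta>)"
    using exists_splitting_vector[OF assms(1,2) w(1)] w(2,3) by metis
  define a b where "a = 3 *\<^sub>R w - \<kappa> *\<^sub>R u" and "b = 3 *\<^sub>R w + \<kappa> *\<^sub>R u"
  show ?thesis
  proof
    have "norm (\<kappa> *\<^sub>R u) \<le> 2 * \<kappa>" using u(1) \<open>\<kappa> > 0\<close> by simp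
    then show "norm a \<le> 3 + 2 * \<kappa>" "norm b \<le> 3 + 2 * \<kappa>"
      using norm_triangle_ineq4[of "3 *\<^sub>R w" "\<kappa> *\<^sub>R u"] norm_triangle_ineq[of "3 *\<^sub>R w" "\<kappa> *\<^sub>R u"] w(1)
      by (auto simp: a_def b_def)
    have "1 * \<bar>\<phi> u\<bar> \<le> s * \<bar>\<phi> u\<bar>" using assms(7) by (intro mult_right_mono) auto
    also have "\<dots> = \<bar>f u + g u\<bar>" using assms(7) by (simp add: abs_mult flip: \<phi>)
    finally have "\<bar>\<kappa> * \<phi> u\<bar> \<le> \<kappa> * (8 * \<delta>)"
      using u(4) \<open>\<kappa> > 0\<close> by (simp add: abs_mult)
    moreover have "\<phi> a = 3 * \<phi> w - \<kappa> * \<phi> u" "\<phi> b = 3 * \<phi> w + \<kappa> * \<phi> u"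
      by (simp_all add: a_def b_def blinfun.bilinear_simps)
    ultimately show "3 - (3 + 8 * \<kappa>) * \<delta> \<le> \<phi> a" "3 - (3 + 8 * \<kappa>) * \<delta> \<le> \<phi> b"
      using w(4) by (auto simp: algebra_simps abs_le_iff)
    have "f w \<le> 1" "g w \<le> 1" using blinfun_apply_unit_le(1)[OF w(1)] assms(1,2) by metis+
    moreover have "\<kappa> * (\<tau> / 4 - 4 * \<delta>) \<le> \<kappa> * f u" "\<kappa> * g u \<le> \<kappa> * (4 * \<delta> - \<tau> / 4)"
      using u(2,3) \<open>\<kappa> > 0\<close> by simp_all
    ultimately show "f a \<le> 4 * \<kappa> * \<delta> - 1" "g b \<le> 4 * \<kappa> * \<delta> - 1"
      using assms(5) by (simp_all add: a_def b_def blinfun.bilinear_simps algebra_simps)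
  qed
qed

text \<open>On the test segment \<open>[a, b]\<close> the direction \<open>\<phi>\<close> of \<open>f + g\<close> is at least \<open>1\<close> while \<open>f a\<close> and
  \<open>g b\<close> are very negative; a ball of radius at most \<open>K\<close> around it on which \<open>\<phi> \<ge> 1/2\<close> cannot
  exist when \<open>norm (f + g)\<close> is too close to \<open>2\<close>.\<close>
lemma segment_ball_bound_imp_norm_add_le:
  fixes f g :: "'a::real_normed_vector \<Rightarrow>\<^sub>L real"
  assumes K: "\<And>(\<phi> :: 'a \<Rightarrow>\<^sub>L real) a b. norm \<phi> = 1 \<Longrightarrow>
      norm a \<le> 3 + 2 * \<kappa> \<Longrightarrow> norm b \<le> 3 + 2 * \<kappa> \<Longrightarrow>
      1 \<le> blinfun_apply \<phi> a \<Longrightarrow> 1 \<le> blinfun_apply \<phi> b \<Longrightarrow>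
      \<exists>x0 r0. r0 \<le> K \<and> dist x0 a \<le> r0 \<and> dist x0 b \<le> r0 \<and> r0 + 1 / 2 \<le> blinfun_apply \<phi> x0"
    and "0 < \<tau>" and "\<kappa> * \<tau> = 16" and \<delta>: "0 < \<delta>" "\<delta> \<le> 1 / 4" "(3 + 8 * \<kappa>) * \<delta> \<le> 2"
      "\<delta> * (2 * K + 1 + 8 * \<kappa>) < 1"
    and f: "norm f = 1" and g: "norm g = 1" and fg: "\<tau> \<le> norm (f - g)"
  shows "norm (f + g) \<le> 2 - 2 * \<delta>"
proof (rule ccontr)
  define s where "s = norm (f + g)"
  assume "\<not> norm (f + g) \<le> 2 - 2 * \<delta>"
  then have s: "2 - 2 * \<delta> < s" "1 \<le> s" using \<delta>(2) by (auto simp: s_def)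
  define \<phi> where "\<phi> = (1 / s) *\<^sub>R (f + g)"
  have "f + g \<noteq> 0" using s(2) by (auto simp: s_def)
  then have "norm \<phi> = 1" by (simp add: \<phi>_def s_def)
  have \<phi>_apply: "s * \<phi> v = f v + g v" for v using s(2) by (simp add: \<phi>_def blinfun.bilinear_simps)
  obtain w where w: "norm w = 1" "1 - \<delta> < \<phi> w"
    using exists_unit_vector_apply_gt[of "1 - \<delta>" \<phi>] \<open>norm \<phi> = 1\<close> \<delta>(1,2) by auto
  have "(2 - 2 * \<delta>) * (1 - \<delta>) \<le> s * \<phi> w" using s w \<delta>(2) by (intro mult_mono) auto
  moreover have "2 - 4 * \<delta> \<le> (2 - 2 * \<delta>) * (1 - \<delta>)" by (simp add: algebra_simps)
  moreover have "f w \<le> 1" "g w \<le> 1" using blinfun_apply_unit_le(1)[OF w(1)] f g by metis+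
  ultimately have "1 - 4 * \<delta> \<le> f w" "1 - 4 * \<delta> \<le> g w" using \<phi>_apply[of w] by linarith+
  then obtain a b where "norm a \<le> 3 + 2 * \<kappa>" "norm b \<le> 3 + 2 * \<kappa>"
    "3 - (3 + 8 * \<kappa>) * \<delta> \<le> \<phi> a" "3 - (3 + 8 * \<kappa>) * \<delta> \<le> \<phi> b"
    and ab: "f a \<le> 4 * \<kappa> * \<delta> - 1" "g b \<le> 4 * \<kappa> * \<delta> - 1"
    using exists_test_segment[OF f g fg assms(2,3) \<phi>_apply s(2) w(1)] w(2) by blast
  then obtain x0 r0 where x0: "r0 \<le> K" "dist x0 a \<le> r0" "dist x0 b \<le> r0" "r0 + 1 / 2 \<le> \<phi> x0"
    using K[OF \<open>norm \<phi> = 1\<close>] \<delta>(3) by fastforce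
  have "f x0 \<le> f a + r0" "g x0 \<le> g b + r0"
    using blinfun_apply_le_add_dist[of f x0 a] blinfun_apply_le_add_dist[of g x0 b] f g x0(2,3) by auto
  moreover have "0 \<le> r0" using zero_le_dist[of x0 a] x0(2) by linarith
  then have "(2 - 2 * \<delta>) * (r0 + 1 / 2) < s * \<phi> x0"
    using s x0(4) \<delta>(2) by (intro mult_less_le_imp_less) auto
  ultimately have "(2 - 2 * \<delta>) * (r0 + 1 / 2) < 8 * \<kappa> * \<delta> - 2 + 2 * r0"
    using \<phi>_apply[of x0] ab by linarith
  then have "3 < \<delta> * (2 * r0 + 1 + 8 * \<kappa>)" by (simp add: algebra_simps)
  moreover have "\<delta> * (2 * r0 + 1 + 8 * \<kappa>) \<le> \<delta> * (2 * K + 1 + 8 * \<kappa>)"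
    using x0(1) \<delta>(1) by (intro mult_left_mono) auto
  ultimately show False using \<delta>(4) by linarith
qed

lemma H_UMIP_imp_uniformly_convex_dual:
  assumes "H_UMIP (X :: 'a::real_normed_vector itself)"
  shows "uniformly_convex_eps_delta TYPE('a \<Rightarrow>\<^sub>L real)"
  unfolding uniformly_convex_eps_delta_def
proof (intro allI impI)
  fix \<tau> :: real assume "\<tau> > 0"
  define \<kappa> where "\<kappa> = 16 / \<tau>"
  have "\<kappa> > 0" "\<kappa> * \<tau> = 16" using \<open>\<tau> > 0\<close> by (auto simp: \<kappa>_def)
  obtain K where "K > 0" and K: "\<And>(\<phi> :: 'a \<Rightarrow>\<^sub>L real) a b. norm \<phi> = 1 \<Longrightarrow>
      norm a \<le> 3 + 2 * \<kappa> \<Longrightarrow> norm b \<le> 3 + 2 * \<kappa> \<Longrightarrow>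
      1 \<le> blinfun_apply \<phi> a \<Longrightarrow> 1 \<le> blinfun_apply \<phi> b \<Longrightarrow>
      \<exists>x0 r0. r0 \<le> K \<and> dist x0 a \<le> r0 \<and> dist x0 b \<le> r0 \<and> r0 + 1 / 2 \<le> blinfun_apply \<phi> x0"
    using H_UMIP_segment_ball[OF assms, of "3 + 2 * \<kappa>"] \<open>\<kappa> > 0\<close> by auto
  define \<delta> where "\<delta> = 1 / (2 * K + 8 * \<kappa> + 4)"
  have "\<delta> > 0" "\<delta> * (2 * K + 8 * \<kappa> + 4) = 1"
    using \<open>K > 0\<close> \<open>\<kappa> > 0\<close> by (auto simp: \<delta>_def)
  moreover have "0 < \<delta> * K" "0 < \<delta> * \<kappa>" using \<open>K > 0\<close> \<open>\<kappa> > 0\<close> \<open>\<delta> > 0\<close> by simp_all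
  ultimately have "\<delta> \<le> 1 / 4" "(3 + 8 * \<kappa>) * \<delta> \<le> 2" "\<delta> * (2 * K + 1 + 8 * \<kappa>) < 1"
    unfolding distrib_left distrib_right by (simp_all add: ac_simps)
  then show "\<exists>\<delta>>0. \<forall>f g :: 'a \<Rightarrow>\<^sub>L real. norm f = 1 \<longrightarrow> norm g = 1 \<longrightarrow>
      \<tau> \<le> norm (f - g) \<longrightarrow> norm (f + g) \<le> 2 - 2 * \<delta>"
    using segment_ball_bound_imp_norm_add_le[OF K \<open>\<tau> > 0\<close> \<open>\<kappa> * \<tau> = 16\<close> \<open>\<delta> > 0\<close>] \<open>\<delta> > 0\<close> by blast
qed

theorem mainTheorem9:
  fixes X :: "'a::banach itself"
  defines "A \<equiv> (\<forall>t. 0 < t \<and> t < 2 \<longrightarrow> d_star X t > 0)"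
      and "B \<equiv> (\<forall>\<epsilon>>0. \<exists>\<delta>>0. F_eps X \<epsilon> \<subseteq> cball 0 (1 - \<delta>))"
      and "C \<equiv> uniformly_convex TYPE('a \<Rightarrow>\<^sub>L real)"
      and "D \<equiv> uniformly_wstar_denting_I X"
      and "E \<equiv> H_UMIP X"
  shows "(A \<longleftrightarrow> B) \<and> (A \<longleftrightarrow> C) \<and> (A \<longleftrightarrow> D) \<and> (A \<longleftrightarrow> E)"
proof -
  let ?UC = "uniformly_convex_eps_delta TYPE('a \<Rightarrow>\<^sub>L real)"
  have "A \<longleftrightarrow> ?UC"
    unfolding A_def d_star_pos_iff_uniformly_wstar_denting
    using uniformly_wstar_denting_imp_uniformly_convex_dual
      uniformly_convex_dual_imp_uniformly_wstar_denting by blast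
  moreover have "B \<longleftrightarrow> ?UC"
    unfolding B_def
    using F_eps_shrinks_imp_uniformly_convex_dual uniformly_convex_dual_imp_F_eps_shrinks by blast
  moreover have "C \<longleftrightarrow> ?UC"
    unfolding C_def by (rule uniformly_convex_iff_eps_delta)
  moreover have "D \<longleftrightarrow> ?UC"
    unfolding D_def
    using wstar_denting_I_imp_uniformly_convex_dual uniformly_convex_dual_imp_wstar_denting_I by blast
  moreover have "E \<longleftrightarrow> ?UC"
    unfolding E_def using H_UMIP_imp_uniformly_convex_dual uniformly_convex_dual_imp_H_UMIP by blast
  ultimately show ?thesis by blast
qed

end
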